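(* Under the model described in the context, but with prior $f(\textbf q)=I\{g(\textbf q,\textbf Q)\le\omega\}$ for some $\omega>0$, where $g(\textbf{q},\textbf{Q})=\mathrm{trace}[(\textbf{I}_{N},\bm{0}_{N,N+p+r})\textbf{Q}\textbf{q}\textbf{q}^{\prime}\textbf{Q}^{\prime}(\textbf{I}_{N},\bm{0}_{N,N+p+r})^{\prime}]$, and assuming the set $R=\{(\bm\zeta,\textbf q): g(\textbf q,\textbf Q)\le\omega\}$ has positive probability under $\mathrm{GCM}(\bm{\alpha}_{M},\bm{\kappa}_{M},\bm{\mu}_{M},\textbf{V}_{M},\pi,\textbf{D};\bm{\psi}_{M})$ (with $\textbf V_M^{-1}=(\textbf H,\textbf Q)$, $\bm\mu_M=\textbf V_M\textbf c$), the posterior of $(\bm\zeta',\textbf q')'$ given $\textbf z$ is this GCM truncated to $R$, i.e. has density equal to the GCM density times $I\{(\bm\zeta,\textbf q)\in R\}$ divided by the GCM probability of $R$. Moreover, for any $\textbf w\in\mathbb R^{2N+p+r}$, setting $\bm\zeta_{rep}=(\textbf H'\textbf H)^{-1}\textbf H'\textbf w$, $\textbf q_{rep}=\textbf Q'\textbf w$, $\textbf y_{rep}=(\textbf I_N,\bm0_{N,N+p+r})\textbf w$ and $\widehat{\textbf y}_{rep}=(\textbf I_N,\bm0_{N,N+p+r})\textbf H\bm\zeta_{rep}$ ($=\textbf X\bm\beta_{rep}+\textbf G\bm\eta_{rep}+\bm\xi_{rep}$ where $\bm\zeta_{rep}=(\bm\xi_{rep}',\bm\beta_{rep}',\bm\eta_{rep}')'$),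 one has $g(\textbf{q}_{rep},\textbf{Q})=(\textbf{y}_{rep}-\widehat{\textbf{y}}_{rep})^{\prime}(\textbf{y}_{rep}-\widehat{\textbf{y}}_{rep})$.
   Context: Notation: $\bm{0}_{a,b}$, $\bm{1}_{a,b}$ are the $a\times b$ zero and ones matrices, $\textbf{I}_n$ the identity, $\mathrm{blkdiag}$ the block-diagonal operator. $\psi_1(x)=x^2$, $\psi_2(x)=e^x$, $\psi_3(x)=\log(1+e^x)$, $\psi_4(x)=\log(1+x^2/\nu)$ with known $\nu>0$. A univariate DY density with unit log-partition $\psi$ and parameters $(\alpha,\kappa)$ is $\mathcal{N}(\alpha,\kappa)\exp\{\alpha w-\kappa\psi(w)\}$ ($\mathcal N$ the normalizing constant). $\mathrm{GCM}(\bm{\alpha},\bm{\kappa},\bm{\mu},\textbf{V},\pi,\textbf{D};\bm{\psi})$ on $\mathbb{R}^M$ denotes the law of $\bm{\mu}+\textbf{V}\textbf{D}(\bm{\theta})\textbf{w}$, where $\bm\theta\in\Omega$ has proper density $\pi$, $\textbf D(\bm\theta)$ is invertible, $\textbf V$ invertible, and $\textbf w$ (independent of $\bm\theta$) has independent coordinates, coordinate $l$ having DY density with parameters $(\alpha_l,\kappa_l)$ and unit log-partition $\psi_{(l)}$, where $\bm\psi=(\psi_{(1)},\ldots,\psi_{(M)})$ acts coordinatewise; its density is $\int_\Omega\pi(\bm\theta)\frac{\prod_l\mathcal N(\alpha_l,\kappa_l)}{|\det\textbf D(\bm\theta)||\det\textbf V|}\exp[\bm\alpha'\textbf D(\bm\theta)^{-1}\textbf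 V^{-1}(\textbf y-\bm\mu)-\bm\kappa'\bm\psi\{\textbf D(\bm\theta)^{-1}\textbf V^{-1}(\textbf y-\bm\mu)\}]d\bm\theta$. Model: data $\textbf{z}=(\textbf{z}_1',\ldots,\textbf{z}_4')'$, $\textbf{z}_k=(Z_{k,1},\ldots,Z_{k,n_k})'$, $N=n_1+\cdots+n_4$, latent $\textbf{y}_k=(Y_{k,1},\ldots,Y_{k,n_k})'$; conditionally independently, $Z_{1,i}\mid Y_{1,i}\sim N(Y_{1,i},\sigma_i^2)$ with $\sigma_i^2>0$ known, $Z_{2,i}\mid Y_{2,i}\sim\mathrm{Poisson}(e^{Y_{2,i}})$, $Z_{3,i}\mid Y_{3,i}\sim\mathrm{Binomial}(m_i,e^{Y_{3,i}}/(1+e^{Y_{3,i}}))$ with known $\textbf m=(m_1,\ldots,m_{n_3})'$, and $Z_{4,i}\mid Y_{4,i}$ has density proportional to $\{1+(Z_{4,i}-Y_{4,i})^2/\nu\}^{-(\nu+1)/2}$. $\textbf{D}_\sigma=\mathrm{diag}(1/\sigma_i^2)$. With known $\textbf X_k$ ($n_k\times p$), $\textbf G_k$ ($n_k\times r$), $\textbf X=(\textbf X_1',\ldots,\textbf X_4')'$, $\textbf G=(\textbf G_1',\ldots,\textbf G_4')'$, set $\textbf y=(\textbf y_1',\ldots,\textbf y_4')'=\textbf X\bm\beta+\textbf G\bm\eta+\bm\xi-\bm\mu_D$, where $\bm\mu_D=(\bm\mu_1',\ldots,\bm\mu_4')'\in\mathbb R^N$, and $\bm\zeta=(\bm\xi',\bm\beta',\bm\eta')'\in\mathbb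 R^{N+p+r}$. Let $\bm\theta\in\Omega$ have proper prior $\pi$, with invertible $\textbf D_\beta(\bm\theta)$ ($p\times p$) and $\textbf D_\eta(\bm\theta)$ ($r\times r$). Prior factor for $\bm\beta$: $|\det\textbf D_\beta(\bm\theta)|^{-1}\exp[\bm\alpha_\beta'\textbf D_\beta(\bm\theta)^{-1}(\bm\beta-\bm\mu_\beta)-\bm\kappa_\beta'\bm\psi_\beta\{\textbf D_\beta(\bm\theta)^{-1}(\bm\beta-\bm\mu_\beta)\}]$ with known $\bm\alpha_\beta,\bm\kappa_\beta$ and coordinatewise DY unit log-partitions $\bm\psi_\beta$; analogously for $\bm\eta$ with $\textbf D_\eta,\bm\mu_\eta,\bm\alpha_\eta,\bm\kappa_\eta,\bm\psi_\eta$. Prior factor for $\bm\xi$ (fixed $\sigma_\xi^2>0$, $\alpha_\xi>0$): $\exp[\bm\alpha_\xi'(\textbf A\bm\zeta-\textbf m_\xi)-\bm\kappa_\xi'\bm\psi_\xi(\textbf A\bm\zeta-\textbf m_\xi)]$ with $\textbf A=\begin{pmatrix}\textbf I_N&\textbf X&\textbf G\\ \sigma_\xi^{-2}\textbf I_N&\bm 0_{N,p}&\bm 0_{N,r}\end{pmatrix}$, $\textbf m_\xi=(\bm\mu_D',\bm\mu_\xi')'$, $\bm\alpha_\xi=(\bm 0_{1,n_1},\alpha_\xi\bm 1_{1,n_2},\alpha_\xi\bm 1_{1,n_3},\bm 0_{1,n_4+N})'$, $\bm\kappa_\xi=(\bm 0_{1,n_1+n_2},2\alpha_\xi\bm 1_{1,n_3},\bm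 0_{1,n_4},\frac12\bm 1_{1,N})'$, and $\bm\psi_\xi$ applying $\psi_k$ to the $k$-th block of the first $N$ coordinates and $\psi_1$ to the last $N$. Let $\textbf H=\begin{pmatrix}\textbf I_N&\textbf X&\textbf G\\ \bm0_{p,N}&\textbf I_p&\bm0_{p,r}\\ \bm0_{r,N}&\bm0_{r,p}&\textbf I_r\\ \textbf I_N&\bm0_{N,p}&\bm0_{N,r}\end{pmatrix}$ ($(2N+p+r)\times(N+p+r)$) and $\textbf Q$ a $(2N+p+r)\times N$ matrix with orthonormal columns satisfying $\textbf H'\textbf Q=\bm0$ (so $\textbf Q\textbf Q'=\textbf I-\textbf H(\textbf H'\textbf H)^{-1}\textbf H'$). Let $\textbf D(\bm\theta)^{-1}=\mathrm{blkdiag}(\textbf I_N,\textbf D_\beta(\bm\theta)^{-1},\textbf D_\eta(\bm\theta)^{-1},\sigma_\xi^{-2}\textbf I_N)$. The location parameters satisfy $(\bm\mu_D',\bm\mu_\beta',\bm\mu_\eta',\bm\mu_\xi')'=-\textbf D(\bm\theta)^{-1}\textbf Q\textbf q$ for the bypass location parameter $\textbf q\in\mathbb R^N$. The posterior is defined by $f(\bm\zeta,\textbf q\mid\textbf z)\propto\int_\Omega\pi(\bm\theta)f(\textbf z\mid\bm\zeta,\textbf q)\,[\bm\xi\text{ factor}][\bm\beta\text{ factor}][\bm\eta\text{ factor}]f(\textbf q)\,d\bm\theta$. Parameters: $\textbf c=(\bm0_{1,n_1+n_2+n_3},\textbf z_4',\bm0_{1,N+p+r})'$, $\bm\alpha_M=(\textbf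 z_1'\textbf D_\sigma,\textbf z_2'+\alpha_\xi\bm1_{1,n_2},\textbf z_3'+\alpha_\xi\bm1_{1,n_3},\bm0_{1,n_4},\bm\alpha_\beta',\bm\alpha_\eta',\bm0_{1,N})'$, $\bm\kappa_M=(\frac12\bm1_{1,n_1}\textbf D_\sigma,\bm1_{1,n_2},\textbf m'+2\alpha_\xi\bm1_{1,n_3},\frac{\nu+1}2\bm1_{1,n_4},\bm\kappa_\beta',\bm\kappa_\eta',\frac12\bm1_{1,N})'$, and $\bm\psi_M$ applies $\psi_k$ to the $k$-th data block of the first $N$ coordinates, $\bm\psi_\beta$ to the next $p$, $\bm\psi_\eta$ to the next $r$, and $\psi_1$ to the last $N$. *)

theory Defs
  imports "HOL-Probability.Probability" "Jordan_Normal_Form.Determinant"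
begin

definition minv :: "real mat \<Rightarrow> real mat" where
  "minv A = (SOME B. B \<in> carrier_mat (dim_col A) (dim_row A) \<and> inverts_mat A B \<and> inverts_mat B A)"

definition hcat :: "real mat \<Rightarrow> real mat \<Rightarrow> real mat" where
  "hcat A B = mat (dim_row A) (dim_col A + dim_col B)
     (\<lambda>(i,j). if j < dim_col A then A $$ (i,j) else B $$ (i, j - dim_col A))"

definition vcat :: "real mat \<Rightarrow> real mat \<Rightarrow> real mat" where
  "vcat A B = mat (dim_row A + dim_row B) (dim_col A)
     (\<lambda>(i,j). if i < dim_row A then A $$ (i,j) else B $$ (i - dim_row A, j))"

definition blkdiag :: "real mat \<Rightarrow> real mat \<Rightarrow> real mat" where
  "blkdiag A B = four_block_mat A (0\<^sub>m (dim_row A) (dim_col B)) (0\<^sub>m (dim_row B) (dim_col A)) B"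

definition vblock :: "real vec \<Rightarrow> nat \<Rightarrow> nat \<Rightarrow> real vec" where
  "vblock v a b = Matrix.vec b (\<lambda>i. v $ (a + i))"

definition outer :: "real vec \<Rightarrow> real mat" where
  "outer v = mat (dim_vec v) (dim_vec v) (\<lambda>(i,j). v $ i * v $ j)"

definition mtrace :: "real mat \<Rightarrow> real" where
  "mtrace A = (\<Sum>i<dim_row A. A $$ (i,i))"

definition psi1 :: "real \<Rightarrow> real" where "psi1 x = x\<^sup>2"
definition psi2 :: "real \<Rightarrow> real" where "psi2 x = exp x"
definition psi3 :: "real \<Rightarrow> real" where "psi3 x = ln (1 + exp x)"
definition psi4 :: "real \<Rightarrow> real \<Rightarrow> real" where "psi4 \<nu> x = ln (1 + x\<^sup>2 / \<nu>)"

text \<open>psi_k on the k-th data block of a length-N vector (blocks of sizes n1, n2, n3, n4).\<close>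
definition blk_psi :: "nat \<Rightarrow> nat \<Rightarrow> nat \<Rightarrow> real \<Rightarrow> nat \<Rightarrow> real \<Rightarrow> real" where
  "blk_psi n1 n2 n3 \<nu> l = (if l < n1 then psi1 else if l < n1 + n2 then psi2
                            else if l < n1 + n2 + n3 then psi3 else psi4 \<nu>)"

definition DY_const :: "real \<Rightarrow> real \<Rightarrow> (real \<Rightarrow> real) \<Rightarrow> real" where
  "DY_const \<alpha> \<kappa> \<psi> = 1 / (\<integral>w. exp (\<alpha> * w - \<kappa> * \<psi> w) \<partial>lborel)"

text \<open>Density of GCM(alpha, kappa, mu, V, pi, D; psi) on R^M (M = dim alpha), where theta
  ranges over the measure space Theta and pi is a density w.r.t. Theta.\<close>
definition gcm_density :: "'a measure \<Rightarrow> ('a \<Rightarrow> real) \<Rightarrow> real vec \<Rightarrow> real vec \<Rightarrow> real vec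
    \<Rightarrow> real mat \<Rightarrow> ('a \<Rightarrow> real mat) \<Rightarrow> (nat \<Rightarrow> real \<Rightarrow> real) \<Rightarrow> real vec \<Rightarrow> real" where
  "gcm_density \<Theta> \<pi> \<alpha> \<kappa> \<mu> V D \<psi> y =
     (\<integral>\<theta>. (let t = minv (D \<theta>) *\<^sub>v (minv V *\<^sub>v (y - \<mu>)) in
        \<pi> \<theta> * (\<Prod>l<dim_vec \<alpha>. DY_const (\<alpha> $ l) (\<kappa> $ l) (\<psi> l))
          / (\<bar>det (D \<theta>)\<bar> * \<bar>det V\<bar>)
          * exp (scalar_prod \<alpha> t - (\<Sum>l<dim_vec \<alpha>. \<kappa> $ l * \<psi> l (t $ l)))) \<partial>\<Theta>)"

definition vint :: "nat \<Rightarrow> (real vec \<Rightarrow> real) \<Rightarrow> real" where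
  "vint M f = (\<integral>x. f (Matrix.vec M x) \<partial>(PiM {..<M} (\<lambda>_. lborel)))"

end

theory Submission
  imports Defs
begin

(* The bypass parametrisation ties the locations of all priors to q through Q q. Hence the
   stacked vector x = (zeta, q) enters every factor of the unnormalised posterior only through
   t = D(theta)^-1 ((H, Q) x - c): its first N coordinates are the linear predictor
   X beta + G eta + xi + (Q q)_1, shifted by the Student-t observations; the next p + r are the
   standardised beta and eta; the last N come from the second half of the prior of xi. Each of
   the four likelihoods is conjugate to the data half of the prior of xi, so for every theta the
   integrand is a constant times the GCM kernel in t, restricted to R; normalising gives the
   truncated GCM. The residual identity holds because Q Q' = I - H (H'H)^-1 H' is the projection
   onto the orthogonal complement of the columns of H, so g(Q' w) = |E Q Q' w|^2. *)

no_notation vec_nth (infixl "$" 90)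

section \<open>Matrix inverses and block matrices\<close>

lemma minv_eqI:
  assumes A: "A \<in> carrier_mat n n" and B: "B \<in> carrier_mat n n" and AB: "A * B = 1\<^sub>m n"
  shows "minv A = B"
proof -
  let ?P = "\<lambda>C. C \<in> carrier_mat (dim_col A) (dim_row A) \<and> inverts_mat A C \<and> inverts_mat C A"
  have "?P B"
    using A B AB mat_mult_left_right_inverse[OF A B AB] unfolding inverts_mat_def by auto
  then have "?P (minv A)" unfolding minv_def by (rule someI)
  then have C: "minv A \<in> carrier_mat n n" and CA: "minv A * A = 1\<^sub>m n"
    using A unfolding inverts_mat_def by auto
  have "minv A = minv A * (A * B)" using C AB by simp
  also have "\<dots> = (minv A * A) * B" using A B C by (simp add: assoc_mult_mat)
  also have "\<dots> = B" using CA B by simp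
  finally show ?thesis .
qed

lemma minv_mat_inverse:
  assumes A: "A \<in> carrier_mat n n" and B: "B \<in> carrier_mat n n" and AB: "A * B = 1\<^sub>m n"
  shows "minv A \<in> carrier_mat n n" and "A * minv A = 1\<^sub>m n" and "minv A * A = 1\<^sub>m n"
  using minv_eqI[OF A B AB] B AB mat_mult_left_right_inverse[OF A B AB] by auto

lemma invertible_mat_minv:
  assumes A: "A \<in> carrier_mat n n" and inv: "invertible_mat A"
  shows "minv A \<in> carrier_mat n n" and "A * minv A = 1\<^sub>m n" and "minv A * A = 1\<^sub>m n"
proof -
  obtain B where AB: "A * B = 1\<^sub>m n" and BA: "B * A = 1\<^sub>m (dim_row B)"
    using inv A unfolding invertible_mat_def inverts_mat_def by auto
  have "dim_col B = n" using arg_cong[OF AB, of dim_col] by simp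
  moreover have "dim_row B = n" using arg_cong[OF BA, of dim_col] A by simp
  ultimately have "B \<in> carrier_mat n n" by auto
  from minv_mat_inverse[OF A this AB]
  show "minv A \<in> carrier_mat n n" and "A * minv A = 1\<^sub>m n" and "minv A * A = 1\<^sub>m n" .
qed

lemma det_nonzero_minv:
  assumes A: "(A :: real mat) \<in> carrier_mat n n" and det: "det A \<noteq> 0"
  shows "minv A \<in> carrier_mat n n" and "A * minv A = 1\<^sub>m n" and "minv A * A = 1\<^sub>m n"
proof -
  obtain B where B: "B \<in> carrier_mat n n" and AB: "A * B = 1\<^sub>m n"
    using det_non_zero_imp_unit[OF A det] unfolding Units_def by (auto simp: ring_mat_simps)
  from minv_mat_inverse[OF A B AB]
  show "minv A \<in> carrier_mat n n" and "A * minv A = 1\<^sub>m n" and "minv A * A = 1\<^sub>m n" .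
qed

lemma hcat_carrier[simp]:
  "A \<in> carrier_mat n a \<Longrightarrow> B \<in> carrier_mat n b \<Longrightarrow> hcat A B \<in> carrier_mat n (a + b)"
  unfolding hcat_def by auto

lemma vcat_carrier[simp]:
  "A \<in> carrier_mat a m \<Longrightarrow> B \<in> carrier_mat b m \<Longrightarrow> vcat A B \<in> carrier_mat (a + b) m"
  unfolding vcat_def by auto

lemma dim_hcat[simp]: "dim_row (hcat A B) = dim_row A" "dim_col (hcat A B) = dim_col A + dim_col B"
  unfolding hcat_def by auto

lemma dim_vcat[simp]: "dim_row (vcat A B) = dim_row A + dim_row B" "dim_col (vcat A B) = dim_col A"
  unfolding vcat_def by auto

lemma row_hcat:
  assumes "i < dim_row A"
  shows "row (hcat A B) i = row A i @\<^sub>v row B i"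
  using assms unfolding hcat_def row_def by (intro eq_vecI) auto

lemma col_vcat:
  assumes "A \<in> carrier_mat a m" "B \<in> carrier_mat b m" "j < m"
  shows "col (vcat A B) j = col A j @\<^sub>v col B j"
  by (rule eq_vecI, insert assms, auto simp: vcat_def)

lemma hcat_mult_vec:
  assumes "dim_row B = dim_row A" and u: "dim_vec u = dim_col A" and v: "dim_vec v = dim_col B"
  shows "hcat A B *\<^sub>v (u @\<^sub>v v) = A *\<^sub>v u + B *\<^sub>v v"
proof (rule eq_vecI)
  fix i assume "i < dim_vec (A *\<^sub>v u + B *\<^sub>v v)"
  then have iA: "i < dim_row A" and iB: "i < dim_row B" using assms by auto
  have "(hcat A B *\<^sub>v (u @\<^sub>v v)) $ i = (row A i @\<^sub>v row B i) \<bullet> (u @\<^sub>v v)"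
    using iA by (simp add: row_hcat)
  also have "\<dots> = row A i \<bullet> u + row B i \<bullet> v"
    by (rule scalar_prod_append[OF _ _ carrier_vecI[OF u] carrier_vecI[OF v]]) auto
  also have "\<dots> = (A *\<^sub>v u + B *\<^sub>v v) $ i" using iA iB by simp
  finally show "(hcat A B *\<^sub>v (u @\<^sub>v v)) $ i = (A *\<^sub>v u + B *\<^sub>v v) $ i" .
qed (use assms in simp)

lemma vcat_mult_vec:
  assumes "dim_col B = dim_col A"
  shows "vcat A B *\<^sub>v v = (A *\<^sub>v v) @\<^sub>v (B *\<^sub>v v)"
proof (rule eq_vecI)
  fix i assume "i < dim_vec ((A *\<^sub>v v) @\<^sub>v (B *\<^sub>v v))"
  then have i: "i < dim_row A + dim_row B" by simp
  have "row (vcat A B) i = (if i < dim_row A then row A i else row B (i - dim_row A))"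
    by (rule eq_vecI) (use i assms in \<open>auto simp: vcat_def\<close>)
  with i show "(vcat A B *\<^sub>v v) $ i = ((A *\<^sub>v v) @\<^sub>v (B *\<^sub>v v)) $ i"
    by simp
qed simp

lemma hcat_mult_vcat:
  assumes A: "A \<in> carrier_mat n a" and B: "B \<in> carrier_mat n b"
    and C: "C \<in> carrier_mat a m" and D: "D \<in> carrier_mat b m"
  shows "hcat A B * vcat C D = A * C + B * D"
  by (rule eq_matI, insert assms, auto simp: row_hcat col_vcat scalar_prod_append[of _ a _ b])

lemma zero_mat_mult_vec[simp]: "v \<in> carrier_vec n \<Longrightarrow> 0\<^sub>m k n *\<^sub>v v = 0\<^sub>v k"
  by auto

lemma smult_one_mat_mult_vec[simp]: "(v :: real vec) \<in> carrier_vec n \<Longrightarrow> (s \<cdot>\<^sub>m 1\<^sub>m n) *\<^sub>v v = s \<cdot>\<^sub>v v"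
  by auto

lemma blkdiag_carrier[simp]:
  "A \<in> carrier_mat a a' \<Longrightarrow> B \<in> carrier_mat b b' \<Longrightarrow> blkdiag A B \<in> carrier_mat (a + b) (a' + b')"
  unfolding blkdiag_def by auto

lemma blkdiag_mult_vec:
  assumes "A \<in> carrier_mat a a" "B \<in> carrier_mat b b" "u \<in> carrier_vec a" "v \<in> carrier_vec b"
  shows "blkdiag A B *\<^sub>v (u @\<^sub>v v) = (A *\<^sub>v u) @\<^sub>v (B *\<^sub>v v)"
  using mult_mat_vec_split[OF assms] assms unfolding blkdiag_def by auto

lemma blkdiag_mult:
  assumes A: "A \<in> carrier_mat a a" and B: "B \<in> carrier_mat b b"
    and C: "C \<in> carrier_mat a a" and D: "D \<in> carrier_mat b b"
  shows "blkdiag A B * blkdiag C D = blkdiag (A * C) (B * D)"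
proof -
  have dims: "dim_row A = a" "dim_col A = a" "dim_row B = b" "dim_col B = b"
    "dim_row C = a" "dim_col C = a" "dim_row D = b" "dim_col D = b"
    "dim_row (A * C) = a" "dim_col (B * D) = b" "dim_row (B * D) = b" "dim_col (A * C) = a"
    using A B C D by auto
  show ?thesis
    unfolding blkdiag_def dims
    unfolding mult_four_block_mat[OF A zero_carrier_mat zero_carrier_mat B C zero_carrier_mat zero_carrier_mat D]
    using A B C D by simp
qed

lemma blkdiag_one: "blkdiag (1\<^sub>m a) (1\<^sub>m b) = 1\<^sub>m (a + b)"
  unfolding blkdiag_def by simp

lemma det_blkdiag:
  assumes A: "A \<in> carrier_mat a a" and B: "B \<in> carrier_mat b b"
  shows "det (blkdiag A B) = det A * det B"
proof -
  have dims: "dim_row A = a" "dim_col A = a" "dim_row B = b" "dim_col B = b" using A B by auto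
  show ?thesis unfolding blkdiag_def dims
    by (rule det_four_block_mat_lower_left_zero[OF A zero_carrier_mat refl B])
qed

lemma vblock_carrier[simp]: "vblock v a b \<in> carrier_vec b"
  and dim_vblock[simp]: "dim_vec (vblock v a b) = b"
  unfolding vblock_def by auto

lemma index_vblock[simp]: "i < b \<Longrightarrow> vblock v a b $ i = v $ (a + i)"
  unfolding vblock_def by auto

lemma vblock_append_left[simp]:
  "i + k \<le> dim_vec u \<Longrightarrow> vblock (u @\<^sub>v v) i k = vblock u i k"
  by (rule eq_vecI) auto

lemma vblock_append_right[simp]:
  "dim_vec u \<le> i \<Longrightarrow> i + k \<le> dim_vec u + dim_vec v \<Longrightarrow> vblock (u @\<^sub>v v) i k = vblock v (i - dim_vec u) k"
  by (rule eq_vecI) auto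

lemma vblock_0_eq[simp]: "dim_vec v = k \<Longrightarrow> vblock v 0 k = v"
  by (rule eq_vecI) auto

lemma append_vblocks3:
  "v \<in> carrier_vec (a + b + c) \<Longrightarrow> (vblock v 0 a @\<^sub>v vblock v a b) @\<^sub>v vblock v (a + b) c = v"
  by (rule eq_vecI) auto

lemma append_vblocks4:
  "v \<in> carrier_vec (a + b + c + d) \<Longrightarrow>
   ((vblock v 0 a @\<^sub>v vblock v a b) @\<^sub>v vblock v (a + b) c) @\<^sub>v vblock v (a + b + c) d = v"
  by (rule eq_vecI) auto

lemma uminus_append_vec: "- (u @\<^sub>v v :: real vec) = (- u) @\<^sub>v (- v)"
  by (rule eq_vecI) auto

lemma prod_lessThan_add: "(\<Prod>l<a + b. f l) = (\<Prod>l<a. f l) * (\<Prod>l<b. f (a + l :: nat))"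
  by (induction b) (auto simp: mult.assoc)

lemma sum_lessThan_add: "(\<Sum>l<a + b. f l) = (\<Sum>l<a. f l) + (\<Sum>l<b. f (a + l :: nat))"
  by (induction b) (auto simp: add.assoc)

definition dy_exponent :: "real vec \<Rightarrow> real vec \<Rightarrow> (nat \<Rightarrow> real \<Rightarrow> real) \<Rightarrow> real vec \<Rightarrow> real" where
  "dy_exponent \<alpha> \<kappa> \<psi> t = \<alpha> \<bullet> t - (\<Sum>l<dim_vec \<alpha>. \<kappa> $ l * \<psi> l (t $ l))"

lemma dy_exponent_eq_sum:
  "dim_vec t = dim_vec \<alpha> \<Longrightarrow>
   dy_exponent \<alpha> \<kappa> \<psi> t = (\<Sum>l<dim_vec \<alpha>. \<alpha> $ l * t $ l - \<kappa> $ l * \<psi> l (t $ l))"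
  unfolding dy_exponent_def scalar_prod_def atLeast0LessThan by (simp add: sum_subtractf)

lemma dy_exponent_cong:
  "(\<And>l. l < dim_vec \<alpha> \<Longrightarrow> \<psi> l = \<psi>' l) \<Longrightarrow> dy_exponent \<alpha> \<kappa> \<psi> t = dy_exponent \<alpha> \<kappa> \<psi>' t"
  unfolding dy_exponent_def by simp

lemma dy_exponent_append:
  assumes "dim_vec \<kappa>1 = dim_vec \<alpha>1" "dim_vec t1 = dim_vec \<alpha>1"
    and "dim_vec \<kappa>2 = dim_vec \<alpha>2" "dim_vec t2 = dim_vec \<alpha>2"
  shows "dy_exponent (\<alpha>1 @\<^sub>v \<alpha>2) (\<kappa>1 @\<^sub>v \<kappa>2) \<psi> (t1 @\<^sub>v t2)
       = dy_exponent \<alpha>1 \<kappa>1 \<psi> t1 + dy_exponent \<alpha>2 \<kappa>2 (\<lambda>l. \<psi> (dim_vec \<alpha>1 + l)) t2"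
proof -
  have "(\<Sum>l<dim_vec \<alpha>1 + dim_vec \<alpha>2. (\<kappa>1 @\<^sub>v \<kappa>2) $ l * \<psi> l ((t1 @\<^sub>v t2) $ l))
      = (\<Sum>l<dim_vec \<alpha>1. \<kappa>1 $ l * \<psi> l (t1 $ l)) + (\<Sum>l<dim_vec \<alpha>2. \<kappa>2 $ l * \<psi> (dim_vec \<alpha>1 + l) (t2 $ l))"
    unfolding sum_lessThan_add using assms by (intro arg_cong2[where f = "(+)"] sum.cong) auto
  moreover have "(\<alpha>1 @\<^sub>v \<alpha>2) \<bullet> (t1 @\<^sub>v t2) = \<alpha>1 \<bullet> t1 + \<alpha>2 \<bullet> t2"
    using assms by (intro scalar_prod_append[of _ "dim_vec \<alpha>1" _ "dim_vec \<alpha>2"] carrier_vecI) auto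
  ultimately show ?thesis unfolding dy_exponent_def by simp
qed

section \<open>Projection onto the orthogonal complement of the design\<close>

lemma scalar_prod_self_eq_0:
  fixes u :: "real vec"
  assumes "u \<bullet> u = 0"
  shows "u = 0\<^sub>v (dim_vec u)"
proof (rule eq_vecI)
  fix i assume i: "i < dim_vec (0\<^sub>v (dim_vec u) :: real vec)"
  have "(\<Sum>j\<in>{0..<dim_vec u}. u $ j * u $ j) = 0" using assms unfolding scalar_prod_def by simp
  then have "\<forall>j\<in>{0..<dim_vec u}. u $ j * u $ j = 0"
    by (subst sum_nonneg_eq_0_iff[symmetric]) auto
  then show "u $ i = 0\<^sub>v (dim_vec u) $ i" using i by auto
qed simp

lemma gram_mat_minv:
  fixes H :: "real mat"
  assumes H: "H \<in> carrier_mat m k"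
    and inj: "\<And>v. v \<in> carrier_vec k \<Longrightarrow> H *\<^sub>v v = 0\<^sub>v m \<Longrightarrow> v = 0\<^sub>v k"
  shows "minv (H\<^sup>T * H) \<in> carrier_mat k k" and "H\<^sup>T * H * minv (H\<^sup>T * H) = 1\<^sub>m k"
    and "minv (H\<^sup>T * H) * (H\<^sup>T * H) = 1\<^sub>m k"
proof -
  have HH: "H\<^sup>T * H \<in> carrier_mat k k" using H by simp
  have "det (H\<^sup>T * H) \<noteq> 0"
  proof
    assume "det (H\<^sup>T * H) = 0"
    then obtain v where v: "v \<in> carrier_vec k" and v0: "v \<noteq> 0\<^sub>v k" and Hv: "(H\<^sup>T * H) *\<^sub>v v = 0\<^sub>v k"
      using det_0_iff_vec_prod_zero[OF HH] by auto
    have "(H *\<^sub>v v) \<bullet> (H *\<^sub>v v) = (H\<^sup>T *\<^sub>v (H *\<^sub>v v)) \<bullet> v"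
      using transpose_vec_mult_scalar[OF H v, of "H *\<^sub>v v"] H v by simp
    also have "\<dots> = 0" using Hv H v by simp
    finally have "H *\<^sub>v v = 0\<^sub>v m" using scalar_prod_self_eq_0 H by fastforce
    with inj v v0 show False by blast
  qed
  from det_nonzero_minv[OF HH this]
  show "minv (H\<^sup>T * H) \<in> carrier_mat k k" and "H\<^sup>T * H * minv (H\<^sup>T * H) = 1\<^sub>m k"
    and "minv (H\<^sup>T * H) * (H\<^sup>T * H) = 1\<^sub>m k" .
qed

lemma hcat_complement_minv:
  assumes H: "H \<in> carrier_mat (k + n) k" and Q: "Q \<in> carrier_mat (k + n) n"
    and L: "L \<in> carrier_mat k (k + n)" and proj: "H * L + Q * Q\<^sup>T = 1\<^sub>m (k + n)"
  shows "hcat H Q * vcat L Q\<^sup>T = 1\<^sub>m (k + n)"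
    and "minv (hcat H Q) = vcat L Q\<^sup>T" and "minv (vcat L Q\<^sup>T) = hcat H Q"
proof -
  have HQ: "hcat H Q \<in> carrier_mat (k + n) (k + n)" using H Q by simp
  have LQ: "vcat L Q\<^sup>T \<in> carrier_mat (k + n) (k + n)" using L Q by simp
  show inv: "hcat H Q * vcat L Q\<^sup>T = 1\<^sub>m (k + n)"
    using proj by (simp add: hcat_mult_vcat[OF H Q L] Q)
  show "minv (hcat H Q) = vcat L Q\<^sup>T" by (rule minv_eqI[OF HQ LQ inv])
  show "minv (vcat L Q\<^sup>T) = hcat H Q"
    by (rule minv_eqI[OF LQ HQ mat_mult_left_right_inverse[OF HQ LQ inv]])
qed

lemma mult_outer:
  assumes A: "A \<in> carrier_mat k n" and q: "q \<in> carrier_vec n"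
  shows "A * outer q = mat k n (\<lambda>(i, j). (A *\<^sub>v q) $ i * q $ j)"
proof (rule eq_matI)
  fix i j assume "i < dim_row (mat k n (\<lambda>(i, j). (A *\<^sub>v q) $ i * q $ j))"
    and "j < dim_col (mat k n (\<lambda>(i, j). (A *\<^sub>v q) $ i * q $ j))"
  then have i: "i < k" and j: "j < n" by auto
  have "col (outer q) j = q $ j \<cdot>\<^sub>v q"
    by (rule eq_vecI, insert j q, auto simp: outer_def)
  then show "(A * outer q) $$ (i, j) = mat k n (\<lambda>(i, j). (A *\<^sub>v q) $ i * q $ j) $$ (i, j)"
    using i j A q by (simp add: outer_def)
qed (insert A q, auto simp: outer_def)

lemma mtrace_mult_outer_transpose:
  assumes A: "A \<in> carrier_mat k n" and q: "q \<in> carrier_vec n"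
  shows "mtrace (A * outer q * A\<^sup>T) = (A *\<^sub>v q) \<bullet> (A *\<^sub>v q)"
proof -
  have diag: "(A * outer q * A\<^sup>T) $$ (i, i) = (A *\<^sub>v q) $ i * (A *\<^sub>v q) $ i" if i: "i < k" for i
  proof -
    have "row (mat k n (\<lambda>(i, j). (A *\<^sub>v q) $ i * q $ j)) i = (A *\<^sub>v q) $ i \<cdot>\<^sub>v q"
      by (rule eq_vecI, insert i q, auto)
    moreover have "q \<bullet> row A i = (A *\<^sub>v q) $ i" using i A q by (simp add: comm_scalar_prod[of _ n])
    ultimately show ?thesis unfolding mult_outer[OF A q] using i A q by simp
  qed
  have "mtrace (A * outer q * A\<^sup>T) = (\<Sum>i<k. (A *\<^sub>v q) $ i * (A *\<^sub>v q) $ i)"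
    unfolding mtrace_def using A q diag by (simp add: outer_def)
  also have "\<dots> = (A *\<^sub>v q) \<bullet> (A *\<^sub>v q)" unfolding scalar_prod_def using A
    by (simp add: lessThan_atLeast0)
  finally show ?thesis .
qed

lemma mtrace_complement_projection:
  assumes H: "H \<in> carrier_mat m k" and Hi: "Hi \<in> carrier_mat k k"
    and Q: "Q \<in> carrier_mat m n" and E: "E \<in> carrier_mat l m"
    and QQ: "Q * Q\<^sup>T = 1\<^sub>m m - H * Hi * H\<^sup>T" and w: "w \<in> carrier_vec m"
  shows "mtrace (E * Q * outer (Q\<^sup>T *\<^sub>v w) * Q\<^sup>T * E\<^sup>T)
    = (E *\<^sub>v w - E *\<^sub>v (H *\<^sub>v (Hi *\<^sub>v (H\<^sup>T *\<^sub>v w))))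
      \<bullet> (E *\<^sub>v w - E *\<^sub>v (H *\<^sub>v (Hi *\<^sub>v (H\<^sup>T *\<^sub>v w))))"
proof -
  define q where "q = Q\<^sup>T *\<^sub>v w"
  have q: "q \<in> carrier_vec n" unfolding q_def using Q w by simp
  have EQ: "E * Q \<in> carrier_mat l n" using E Q by simp
  have "outer q \<in> carrier_mat n n" using q by (simp add: outer_def)
  then have EQO: "E * Q * outer q \<in> carrier_mat l n" by (rule mult_carrier_mat[OF EQ])
  have "E * Q * outer q * Q\<^sup>T * E\<^sup>T = (E * Q * outer q) * (Q\<^sup>T * E\<^sup>T)"
    by (rule assoc_mult_mat[OF EQO transpose_carrier_mat[THEN iffD2, OF Q]
          transpose_carrier_mat[THEN iffD2, OF E]])
  also have "Q\<^sup>T * E\<^sup>T = (E * Q)\<^sup>T" by (rule transpose_mult[OF E Q, symmetric])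
  finally have "mtrace (E * Q * outer q * Q\<^sup>T * E\<^sup>T) = mtrace ((E * Q) * outer q * (E * Q)\<^sup>T)"
    by (rule arg_cong)
  also have "\<dots> = ((E * Q) *\<^sub>v q) \<bullet> ((E * Q) *\<^sub>v q)" by (rule mtrace_mult_outer_transpose[OF EQ q])
  also have "(E * Q) *\<^sub>v q = E *\<^sub>v w - E *\<^sub>v (H *\<^sub>v (Hi *\<^sub>v (H\<^sup>T *\<^sub>v w)))"
  proof -
    have P: "H * Hi * H\<^sup>T \<in> carrier_mat m m" using H Hi by simp
    have "(E * Q) *\<^sub>v q = E *\<^sub>v ((Q * Q\<^sup>T) *\<^sub>v w)" unfolding q_def using E Q w by simp
    also have "(Q * Q\<^sup>T) *\<^sub>v w = w - (H * Hi * H\<^sup>T) *\<^sub>v w"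
      unfolding QQ using P w by (simp add: minus_mult_distrib_mat_vec[OF one_carrier_mat P w])
    also have "(H * Hi * H\<^sup>T) *\<^sub>v w = H *\<^sub>v (Hi *\<^sub>v (H\<^sup>T *\<^sub>v w))"
      using H Hi w by (simp add: assoc_mult_mat_vec[of _ m k _ m])
    finally show ?thesis
      using E H Hi w by (simp add: mult_minus_distrib_mat_vec[of _ l m])
  qed
  finally show ?thesis unfolding q_def .
qed

section \<open>The four likelihoods as Diaconis--Ylvisaker kernels\<close>

lemma normal_density_dy_form:
  fixes s y z :: real assumes s: "s > 0"
  shows "normal_density y (sqrt s) z
     = exp (- z\<^sup>2 / (2 * s)) / sqrt (2 * pi * s) * exp (z / s * y - 1 / (2 * s) * psi1 y)"
proof -
  have "- (z - y)\<^sup>2 / (2 * (sqrt s)\<^sup>2) = - z\<^sup>2 / (2 * s) + (z / s * y - 1 / (2 * s) * y\<^sup>2)"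
    using s by (simp add: field_simps power2_eq_square)
  then have "exp (- (z - y)\<^sup>2 / (2 * (sqrt s)\<^sup>2)) = exp (- z\<^sup>2 / (2 * s)) * exp (z / s * y - 1 / (2 * s) * y\<^sup>2)"
    by (simp add: exp_add[symmetric])
  then show ?thesis unfolding normal_density_def psi1_def using s by simp
qed

lemma poisson_pmf_dy_form:
  "pmf (poisson_pmf (exp y)) k = exp (real k * y - psi2 y) / fact k"
proof -
  have "exp y ^ k = exp (real k * y)" by (simp add: exp_of_nat_mult)
  then show ?thesis by (simp add: pmf_poisson psi2_def exp_diff exp_minus field_simps)
qed

lemma binomial_pmf_dy_form:
  fixes y :: real assumes k: "k \<le> n"
  shows "pmf (binomial_pmf n (exp y / (1 + exp y))) k = real (n choose k) * exp (real k * y - real n * psi3 y)"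
proof -
  define e where "e = exp y"
  have e: "e > 0" unfolding e_def by simp
  have p: "0 \<le> e / (1 + e)" "e / (1 + e) \<le> 1" using e by auto
  have "(1 + e) ^ n = (1 + e) ^ k * (1 + e) ^ (n - k)" using k by (simp add: power_add[symmetric])
  then have "(e / (1 + e)) ^ k * (1 - e / (1 + e)) ^ (n - k) = e ^ k / (1 + e) ^ n"
    using e by (simp add: power_divide field_simps)
  moreover have "e ^ k = exp (real k * y)" unfolding e_def by (simp add: exp_of_nat_mult)
  moreover have "(1 + e) ^ n = exp (real n * ln (1 + e))" using e by (simp add: exp_of_nat_mult)
  ultimately have "(e / (1 + e)) ^ k * (1 - e / (1 + e)) ^ (n - k) = exp (real k * y - real n * ln (1 + e))"
    by (simp add: exp_diff)
  then show ?thesis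
    unfolding psi3_def using pmf_binomial[OF p, of n k] by (simp add: e_def mult.assoc)
qed

lemma student_kernel_dy_form:
  fixes y z \<nu> :: real assumes \<nu>: "\<nu> > 0"
  shows "(1 + (z - y)\<^sup>2 / \<nu>) powr (- (\<nu> + 1) / 2) = exp (- (\<nu> + 1) / 2 * psi4 \<nu> (y - z))"
proof -
  have "1 + (z - y)\<^sup>2 / \<nu> > 0" using \<nu> by (simp add: add_pos_nonneg)
  moreover have "(z - y)\<^sup>2 = (y - z)\<^sup>2" by (simp add: power2_commute)
  ultimately show ?thesis unfolding psi4_def powr_def by (simp add: algebra_simps)
qed

lemma gcm_density_inverse_param:
  fixes B V :: "real mat" and Di :: "'a \<Rightarrow> real mat"
  assumes B: "B \<in> carrier_mat M M" and V: "V \<in> carrier_mat M M" and BV: "B * V = 1\<^sub>m M"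
    and minv_V: "minv V = B" and c: "c \<in> carrier_vec M" and x: "x \<in> carrier_vec M"
    and D: "\<And>\<theta>. \<theta> \<in> space \<Theta> \<Longrightarrow> minv (D \<theta>) = Di \<theta>"
  shows "gcm_density \<Theta> \<pi> \<alpha> \<kappa> (V *\<^sub>v c) V D \<psi> x
    = (\<Prod>l<dim_vec \<alpha>. DY_const (\<alpha> $ l) (\<kappa> $ l) (\<psi> l)) / \<bar>det V\<bar>
      * (\<integral>\<theta>. \<pi> \<theta> / \<bar>det (D \<theta>)\<bar> * exp (dy_exponent \<alpha> \<kappa> \<psi> (Di \<theta> *\<^sub>v (B *\<^sub>v x - c))) \<partial>\<Theta>)"
proof -
  have "minv V *\<^sub>v (x - V *\<^sub>v c) = B *\<^sub>v x - c"
    unfolding minv_V using B V BV x c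
    by (simp add: mult_minus_distrib_mat_vec[OF B] assoc_mult_mat_vec[symmetric, of _ M M _ M])
  then show ?thesis
    unfolding gcm_density_def Let_def dy_exponent_def[symmetric]
    by (simp add: D integral_mult_right_zero[symmetric] abs_mult ac_simps cong: Bochner_Integration.integral_cong)
qed

lemma vint_cong: "(\<And>x. x \<in> carrier_vec M \<Longrightarrow> f x = g x) \<Longrightarrow> vint M f = vint M g"
  unfolding vint_def by (rule Bochner_Integration.integral_cong) auto

lemma vint_cmult: "vint M (\<lambda>x. a * f x) = a * vint M f"
  unfolding vint_def by simp

lemma vint_truncated_normalisation:
  assumes u: "\<And>x. x \<in> carrier_vec M \<Longrightarrow> u x = C * indicator R x * k x"
    and f: "\<And>x. x \<in> carrier_vec M \<Longrightarrow> f x = K * k x"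
    and C: "C \<noteq> 0" and P: "vint M (\<lambda>x. indicator R x * f x) > 0"
    and x: "x \<in> carrier_vec M"
  shows "u x / vint M u = f x * indicator R x / vint M (\<lambda>x. indicator R x * f x)"
proof -
  define V where "V = vint M (\<lambda>x. indicator R x * k x)"
  have "vint M u = C * V"
    unfolding V_def by (subst vint_cong[OF u]) (simp_all add: vint_cmult[symmetric] mult.assoc)
  moreover have P_eq: "vint M (\<lambda>x. indicator R x * f x) = K * V"
    unfolding V_def by (subst vint_cong[where g = "\<lambda>x. K * (indicator R x * k x)"])
      (simp_all add: f vint_cmult ac_simps)
  moreover have "K \<noteq> 0" "V \<noteq> 0" using P P_eq by auto
  ultimately show ?thesis using u[OF x] f[OF x] C by (simp add: field_simps)
qed

locale bypass_design =
  fixes N p r M :: nat and X G H Q E :: "real mat" and g :: "real vec \<Rightarrow> real"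
  assumes M_def: "M = 2 * N + p + r"
    and H_def: "H = vcat (vcat (vcat (hcat (hcat (1\<^sub>m N) X) G)
                             (hcat (hcat (0\<^sub>m p N) (1\<^sub>m p)) (0\<^sub>m p r)))
                       (hcat (hcat (0\<^sub>m r N) (0\<^sub>m r p)) (1\<^sub>m r)))
                 (hcat (hcat (1\<^sub>m N) (0\<^sub>m N p)) (0\<^sub>m N r))"
    and E_def: "E = hcat (1\<^sub>m N) (0\<^sub>m N (N + p + r))"
    and g_def: "g = (\<lambda>q. mtrace (E * Q * outer q * Q\<^sup>T * E\<^sup>T))"
    and X: "X \<in> carrier_mat N p" and G: "G \<in> carrier_mat N r"
    and Q: "Q \<in> carrier_mat M N"
    and QQ: "Q * Q\<^sup>T = 1\<^sub>m M - H * minv (H\<^sup>T * H) * H\<^sup>T"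

(* The posterior identity is pointwise algebra under the integrals. *)
locale truncated_gcm_model = bypass_design N p r M X G H Q E g
  for N p r M :: nat and X G H Q E :: "real mat" and g :: "real vec \<Rightarrow> real" +
  fixes n1 n2 n3 n4 :: nat and z :: "real vec" and \<sigma>2 :: "nat \<Rightarrow> real" and m :: "nat \<Rightarrow> nat"
    and \<nu> :: real and \<Theta> :: "'a measure" and \<pi> :: "'a \<Rightarrow> real"
    and D\<beta> D\<eta> :: "'a \<Rightarrow> real mat"
    and \<alpha>\<beta> \<kappa>\<beta> \<alpha>\<eta> \<kappa>\<eta> :: "real vec" and \<psi>\<beta> \<psi>\<eta> :: "nat \<Rightarrow> real \<Rightarrow> real"
    and \<alpha>\<xi> \<sigma>\<xi>2 \<omega> :: real
    and Dinv Dm :: "'a \<Rightarrow> real mat" and A VM :: "real mat" and \<alpha>\<xi>v \<kappa>\<xi>v c \<alpha>M \<kappa>M \<mu>M :: "real vec"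
    and \<psi>\<xi> \<psi>M :: "nat \<Rightarrow> real \<Rightarrow> real" and lik unnorm post gcm :: "real vec \<Rightarrow> real"
    and R :: "real vec set" and PR :: real
  assumes N_def: "N = n1 + n2 + n3 + n4"
    and Dinv_def: "Dinv = (\<lambda>\<theta>. blkdiag (blkdiag (blkdiag (1\<^sub>m N) (minv (D\<beta> \<theta>))) (minv (D\<eta> \<theta>)))
                              ((1 / \<sigma>\<xi>2) \<cdot>\<^sub>m 1\<^sub>m N))"
    and Dm_def: "Dm = (\<lambda>\<theta>. minv (Dinv \<theta>))"
    and A_def: "A = vcat (hcat (hcat (1\<^sub>m N) X) G)
                 (hcat (hcat ((1 / \<sigma>\<xi>2) \<cdot>\<^sub>m 1\<^sub>m N) (0\<^sub>m N p)) (0\<^sub>m N r))"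
    and \<alpha>\<xi>v_def: "\<alpha>\<xi>v = Matrix.vec (2 * N) (\<lambda>l. if n1 \<le> l \<and> l < n1 + n2 + n3 then \<alpha>\<xi> else 0)"
    and \<kappa>\<xi>v_def: "\<kappa>\<xi>v = Matrix.vec (2 * N) (\<lambda>l. if n1 + n2 \<le> l \<and> l < n1 + n2 + n3 then 2 * \<alpha>\<xi>
                                        else if N \<le> l then 1 / 2 else 0)"
    and \<psi>\<xi>_def: "\<psi>\<xi> = (\<lambda>l. if l < N then blk_psi n1 n2 n3 \<nu> l else psi1)"
    and lik_def: "lik = (\<lambda>y.
           (\<Prod>i<n1. normal_density (y $ i) (sqrt (\<sigma>2 i)) (z $ i))
         * (\<Prod>i<n2. pmf (poisson_pmf (exp (y $ (n1 + i)))) (nat \<lfloor>z $ (n1 + i)\<rfloor>))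
         * (\<Prod>i<n3. pmf (binomial_pmf (m i) (exp (y $ (n1 + n2 + i)) / (1 + exp (y $ (n1 + n2 + i)))))
                        (nat \<lfloor>z $ (n1 + n2 + i)\<rfloor>))
         * (\<Prod>i<n4. (1 + (z $ (n1 + n2 + n3 + i) - y $ (n1 + n2 + n3 + i))\<^sup>2 / \<nu>) powr (- (\<nu> + 1) / 2)))"
    and unnorm_def: "unnorm = (\<lambda>x.
           (let \<zeta> = vec_first x (N + p + r); q = vec_last x N;
                \<xi> = vblock \<zeta> 0 N; \<beta> = vblock \<zeta> N p; \<eta> = vblock \<zeta> (N + p) r
            in \<integral>\<theta>. (let loc = - (Dinv \<theta> *\<^sub>v (Q *\<^sub>v q));
                         \<mu>D = vblock loc 0 N; \<mu>\<beta> = vblock loc N p;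
                         \<mu>\<eta> = vblock loc (N + p) r; \<mu>\<xi> = vblock loc (N + p + r) N;
                         y = X *\<^sub>v \<beta> + G *\<^sub>v \<eta> + \<xi> - \<mu>D;
                         u\<xi> = A *\<^sub>v \<zeta> - (\<mu>D @\<^sub>v \<mu>\<xi>);
                         u\<beta> = minv (D\<beta> \<theta>) *\<^sub>v \<beta> - \<mu>\<beta>;
                         u\<eta> = minv (D\<eta> \<theta>) *\<^sub>v \<eta> - \<mu>\<eta>
                     in \<pi> \<theta> * lik y
                        * exp (scalar_prod \<alpha>\<xi>v u\<xi> - (\<Sum>l<2 * N. \<kappa>\<xi>v $ l * \<psi>\<xi> l (u\<xi> $ l)))
                        * (1 / \<bar>det (D\<beta> \<theta>)\<bar>)
                        * exp (scalar_prod \<alpha>\<beta> u\<beta> - (\<Sum>j<p. \<kappa>\<beta> $ j * \<psi>\<beta> j (u\<beta> $ j)))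
                        * (1 / \<bar>det (D\<eta> \<theta>)\<bar>)
                        * exp (scalar_prod \<alpha>\<eta> u\<eta> - (\<Sum>j<r. \<kappa>\<eta> $ j * \<psi>\<eta> j (u\<eta> $ j)))
                        * (if g q \<le> \<omega> then 1 else 0)) \<partial>\<Theta>))"
    and post_def: "post = (\<lambda>x. unnorm x / vint M unnorm)"
    and c_def: "c = Matrix.vec M (\<lambda>i. if n1 + n2 + n3 \<le> i \<and> i < N then z $ i else 0)"
    and \<alpha>M_def: "\<alpha>M = Matrix.vec M (\<lambda>i. if i < n1 then z $ i / \<sigma>2 i
                              else if i < n1 + n2 + n3 then z $ i + \<alpha>\<xi>
                              else if i < N then 0
                              else if i < N + p then \<alpha>\<beta> $ (i - N)
                              else if i < N + p + r then \<alpha>\<eta> $ (i - N - p)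
                              else 0)"
    and \<kappa>M_def: "\<kappa>M = Matrix.vec M (\<lambda>i. if i < n1 then 1 / (2 * \<sigma>2 i)
                              else if i < n1 + n2 then 1
                              else if i < n1 + n2 + n3 then real (m (i - n1 - n2)) + 2 * \<alpha>\<xi>
                              else if i < N then (\<nu> + 1) / 2
                              else if i < N + p then \<kappa>\<beta> $ (i - N)
                              else if i < N + p + r then \<kappa>\<eta> $ (i - N - p)
                              else 1 / 2)"
    and \<psi>M_def: "\<psi>M = (\<lambda>i. if i < N then blk_psi n1 n2 n3 \<nu> i
                 else if i < N + p then \<psi>\<beta> (i - N)
                 else if i < N + p + r then \<psi>\<eta> (i - N - p)
                 else psi1)"
    and VM_def: "VM = minv (hcat H Q)"
    and \<mu>M_def: "\<mu>M = VM *\<^sub>v c"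
    and gcm_def: "gcm = gcm_density \<Theta> \<pi> \<alpha>M \<kappa>M \<mu>M VM Dm \<psi>M"
    and R_def: "R = {x. g (vec_last x N) \<le> \<omega>}"
    and PR_def: "PR = vint M (\<lambda>x. indicator R x * gcm x)"
    and \<sigma>2_pos: "\<forall>i<n1. \<sigma>2 i > 0"
    and z_pois: "\<forall>i<n2. z $ (n1 + i) \<in> \<nat>"
    and z_binom: "\<forall>i<n3. z $ (n1 + n2 + i) \<in> \<nat> \<and> z $ (n1 + n2 + i) \<le> real (m i)"
    and \<nu>_pos: "\<nu> > 0"
    and D\<beta>: "\<forall>\<theta>\<in>space \<Theta>. D\<beta> \<theta> \<in> carrier_mat p p \<and> invertible_mat (D\<beta> \<theta>)"
    and D\<eta>: "\<forall>\<theta>\<in>space \<Theta>. D\<eta> \<theta> \<in> carrier_mat r r \<and> invertible_mat (D\<eta> \<theta>)"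
    and \<alpha>\<beta>: "\<alpha>\<beta> \<in> carrier_vec p" and \<kappa>\<beta>: "\<kappa>\<beta> \<in> carrier_vec p"
    and \<alpha>\<eta>: "\<alpha>\<eta> \<in> carrier_vec r" and \<kappa>\<eta>: "\<kappa>\<eta> \<in> carrier_vec r"
    and \<sigma>\<xi>2_pos: "\<sigma>\<xi>2 > 0"
    and PR_pos: "PR > 0"

context bypass_design
begin

lemma M_eq: "M = N + p + r + N"
  using M_def by simp

lemma H_carrier: "H \<in> carrier_mat M (N + p + r)"
  unfolding H_def M_eq using X G
  by (intro vcat_carrier hcat_carrier one_carrier_mat zero_carrier_mat; simp)

lemma E_carrier: "E \<in> carrier_mat N M"
proof -
  have "E \<in> carrier_mat N (N + (N + p + r))" unfolding E_def by simp
  then show ?thesis by (simp add: M_eq algebra_simps)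
qed

lemma H_mult_vec:
  assumes "\<xi> \<in> carrier_vec N" "\<beta> \<in> carrier_vec p" "\<eta> \<in> carrier_vec r"
  shows "H *\<^sub>v ((\<xi> @\<^sub>v \<beta>) @\<^sub>v \<eta>) = (((\<xi> + X *\<^sub>v \<beta> + G *\<^sub>v \<eta>) @\<^sub>v \<beta>) @\<^sub>v \<eta>) @\<^sub>v \<xi>"
  unfolding H_def using assms carrier_matD[OF X] carrier_matD[OF G]
  by (simp add: vcat_mult_vec hcat_mult_vec)

lemma H_injective:
  assumes v: "v \<in> carrier_vec (N + p + r)" and Hv: "H *\<^sub>v v = 0\<^sub>v M"
  shows "v = 0\<^sub>v (N + p + r)"
proof -
  define \<xi> \<beta> \<eta> where "\<xi> = vblock v 0 N" and "\<beta> = vblock v N p" and "\<eta> = vblock v (N + p) r"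
  have "v = (\<xi> @\<^sub>v \<beta>) @\<^sub>v \<eta>" unfolding \<xi>_def \<beta>_def \<eta>_def using append_vblocks3[OF v] by simp
  then have Hv': "(((\<xi> + X *\<^sub>v \<beta> + G *\<^sub>v \<eta>) @\<^sub>v \<beta>) @\<^sub>v \<eta>) @\<^sub>v \<xi> = 0\<^sub>v M"
    using Hv H_mult_vec[of \<xi> \<beta> \<eta>] unfolding \<xi>_def \<beta>_def \<eta>_def by simp
  show ?thesis
  proof (rule eq_vecI)
    fix i assume "i < dim_vec (0\<^sub>v (N + p + r) :: real vec)"
    then have i: "i < N + p + r" by simp
    \<comment> \<open>every coordinate of v reappears in H v: those of \<xi> in the last block\<close>
    have "((((\<xi> + X *\<^sub>v \<beta> + G *\<^sub>v \<eta>) @\<^sub>v \<beta>) @\<^sub>v \<eta>) @\<^sub>v \<xi>) $ (if i < N then N + p + r + i else i)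
        = v $ i"
      using i X G by (auto simp: \<xi>_def \<beta>_def \<eta>_def)
    then show "v $ i = 0\<^sub>v (N + p + r) $ i" using Hv' i M_eq by (simp split: if_splits)
  qed (use v in simp)
qed

lemma gram_minv:
  shows "minv (H\<^sup>T * H) \<in> carrier_mat (N + p + r) (N + p + r)"
    and "H\<^sup>T * H * minv (H\<^sup>T * H) = 1\<^sub>m (N + p + r)"
    and "minv (H\<^sup>T * H) * (H\<^sup>T * H) = 1\<^sub>m (N + p + r)"
  using gram_mat_minv[OF H_carrier H_injective] by blast+

lemma hcat_H_Q_minv:
  shows "hcat H Q \<in> carrier_mat M M" and "minv (hcat H Q) \<in> carrier_mat M M"
    and "hcat H Q * minv (hcat H Q) = 1\<^sub>m M" and "minv (minv (hcat H Q)) = hcat H Q"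
proof -
  let ?K = "N + p + r" and ?L = "minv (H\<^sup>T * H) * H\<^sup>T"
  have H: "H \<in> carrier_mat (?K + N) ?K" and Q': "Q \<in> carrier_mat (?K + N) N"
    using H_carrier Q M_eq by auto
  have L: "?L \<in> carrier_mat ?K (?K + N)" using gram_minv(1) H by simp
  have P: "H * minv (H\<^sup>T * H) * H\<^sup>T \<in> carrier_mat (?K + N) (?K + N)" using gram_minv(1) H by simp
  have "H * ?L = H * minv (H\<^sup>T * H) * H\<^sup>T"
    using gram_minv(1) H by (simp add: assoc_mult_mat[of _ "?K + N" ?K _ ?K _ "?K + N"])
  then have "H * ?L + Q * Q\<^sup>T = 1\<^sub>m (?K + N)"
    unfolding QQ M_eq by (intro eq_matI) (use P in auto)
  note inv = hcat_complement_minv[OF H Q' L this]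
  have "vcat ?L Q\<^sup>T \<in> carrier_mat M M" using L Q' M_eq by simp
  then show "hcat H Q \<in> carrier_mat M M" and "minv (hcat H Q) \<in> carrier_mat M M"
    and "hcat H Q * minv (hcat H Q) = 1\<^sub>m M" and "minv (minv (hcat H Q)) = hcat H Q"
    using H Q' inv M_eq by simp_all
qed

lemma g_eq_residual_sum_of_squares:
  "\<forall>w\<in>carrier_vec M.
     let \<zeta>rep = minv (H\<^sup>T * H) *\<^sub>v (H\<^sup>T *\<^sub>v w); qrep = Q\<^sup>T *\<^sub>v w;
         yrep = E *\<^sub>v w; yhat = E *\<^sub>v (H *\<^sub>v \<zeta>rep)
     in g qrep = scalar_prod (yrep - yhat) (yrep - yhat)"
  using mtrace_complement_projection[OF H_carrier gram_minv(1) Q E_carrier QQ]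
  unfolding g_def Let_def by simp

end

context truncated_gcm_model
begin

definition alpha_prior :: "real vec" where
  "alpha_prior = Matrix.vec N (\<lambda>l. if n1 \<le> l \<and> l < n1 + n2 + n3 then \<alpha>\<xi> else 0)"

definition kappa_prior :: "real vec" where
  "kappa_prior = Matrix.vec N (\<lambda>l. if n1 + n2 \<le> l \<and> l < n1 + n2 + n3 then 2 * \<alpha>\<xi> else 0)"

definition alpha_data :: "real vec" where
  "alpha_data = Matrix.vec N (\<lambda>i. if i < n1 then z $ i / \<sigma>2 i
                                  else if i < n1 + n2 + n3 then z $ i + \<alpha>\<xi> else 0)"

definition kappa_data :: "real vec" where
  "kappa_data = Matrix.vec N (\<lambda>i. if i < n1 then 1 / (2 * \<sigma>2 i) else if i < n1 + n2 then 1
                                  else if i < n1 + n2 + n3 then real (m (i - n1 - n2)) + 2 * \<alpha>\<xi>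
                                  else (\<nu> + 1) / 2)"

definition shift_data :: "real vec" where
  "shift_data = Matrix.vec N (\<lambda>i. if n1 + n2 + n3 \<le> i then z $ i else 0)"

definition half_vec :: "real vec" where
  "half_vec = Matrix.vec N (\<lambda>_. 1 / 2)"

abbreviation data_psi :: "nat \<Rightarrow> real \<Rightarrow> real" where
  "data_psi \<equiv> blk_psi n1 n2 n3 \<nu>"

definition lik_coord :: "nat \<Rightarrow> real \<Rightarrow> real" where
  "lik_coord i y =
     (if i < n1 then normal_density y (sqrt (\<sigma>2 i)) (z $ i)
      else if i < n1 + n2 then pmf (poisson_pmf (exp y)) (nat \<lfloor>z $ i\<rfloor>)
      else if i < n1 + n2 + n3 then pmf (binomial_pmf (m (i - n1 - n2)) (exp y / (1 + exp y))) (nat \<lfloor>z $ i\<rfloor>)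
      else (1 + (z $ i - y)\<^sup>2 / \<nu>) powr (- (\<nu> + 1) / 2))"

definition lik_coord_const :: "nat \<Rightarrow> real" where
  "lik_coord_const i =
     (if i < n1 then exp (- (z $ i)\<^sup>2 / (2 * \<sigma>2 i)) / sqrt (2 * pi * \<sigma>2 i)
      else if i < n1 + n2 then 1 / fact (nat \<lfloor>z $ i\<rfloor>)
      else if i < n1 + n2 + n3 then real (m (i - n1 - n2) choose nat \<lfloor>z $ i\<rfloor>)
      else 1)"

definition lik_const :: real where
  "lik_const = (\<Prod>i<N. lik_coord_const i)"

(* D(theta)^-1 V_M^-1 (x - mu_M), since V_M^-1 = (H, Q) and mu_M = V_M c. *)
definition gcm_arg :: "real vec \<Rightarrow> 'a \<Rightarrow> real vec" where
  "gcm_arg x \<theta> = Dinv \<theta> *\<^sub>v (hcat H Q *\<^sub>v x - c)"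

definition gcm_kernel :: "real vec \<Rightarrow> real" where
  "gcm_kernel x = (\<integral>\<theta>. \<pi> \<theta> * exp (dy_exponent \<alpha>M \<kappa>M \<psi>M (gcm_arg x \<theta>))
                          / (\<bar>det (D\<beta> \<theta>)\<bar> * \<bar>det (D\<eta> \<theta>)\<bar>) \<partial>\<Theta>)"

lemma data_vec_carriers[simp]:
  "alpha_prior \<in> carrier_vec N" "kappa_prior \<in> carrier_vec N" "alpha_data \<in> carrier_vec N"
  "kappa_data \<in> carrier_vec N" "shift_data \<in> carrier_vec N" "half_vec \<in> carrier_vec N"
  unfolding alpha_prior_def kappa_prior_def alpha_data_def kappa_data_def shift_data_def half_vec_def
  by auto

lemma data_vec_dims[simp]:
  "dim_vec alpha_prior = N" "dim_vec kappa_prior = N" "dim_vec alpha_data = N"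
  "dim_vec kappa_data = N" "dim_vec shift_data = N" "dim_vec half_vec = N"
  by (simp_all add: alpha_prior_def kappa_prior_def alpha_data_def kappa_data_def shift_data_def half_vec_def)

lemma alpha_M_blocks: "\<alpha>M = ((alpha_data @\<^sub>v \<alpha>\<beta>) @\<^sub>v \<alpha>\<eta>) @\<^sub>v 0\<^sub>v N"
  unfolding \<alpha>M_def alpha_data_def using \<alpha>\<beta> \<alpha>\<eta> by (intro eq_vecI) (auto simp: M_eq N_def)

lemma kappa_M_blocks: "\<kappa>M = ((kappa_data @\<^sub>v \<kappa>\<beta>) @\<^sub>v \<kappa>\<eta>) @\<^sub>v half_vec"
  unfolding \<kappa>M_def kappa_data_def half_vec_def using \<kappa>\<beta> \<kappa>\<eta> by (intro eq_vecI) (auto simp: M_eq N_def)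

lemma c_blocks: "c = ((shift_data @\<^sub>v 0\<^sub>v p) @\<^sub>v 0\<^sub>v r) @\<^sub>v 0\<^sub>v N"
  unfolding c_def shift_data_def by (intro eq_vecI) (auto simp: M_eq)

lemma alpha_xi_blocks: "\<alpha>\<xi>v = alpha_prior @\<^sub>v 0\<^sub>v N"
  unfolding \<alpha>\<xi>v_def alpha_prior_def by (intro eq_vecI) (auto simp: N_def)

lemma kappa_xi_blocks: "\<kappa>\<xi>v = kappa_prior @\<^sub>v half_vec"
  unfolding \<kappa>\<xi>v_def kappa_prior_def half_vec_def by (intro eq_vecI) (auto simp: N_def)

lemma gcm_exponent_split:
  assumes "a \<in> carrier_vec N" "b \<in> carrier_vec p" "d \<in> carrier_vec r" "e \<in> carrier_vec N"
  shows "dy_exponent \<alpha>M \<kappa>M \<psi>M (((a @\<^sub>v b) @\<^sub>v d) @\<^sub>v e)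
    = dy_exponent alpha_data kappa_data data_psi a + dy_exponent \<alpha>\<beta> \<kappa>\<beta> \<psi>\<beta> b
      + dy_exponent \<alpha>\<eta> \<kappa>\<eta> \<psi>\<eta> d + dy_exponent (0\<^sub>v N) half_vec (\<lambda>_. psi1) e"
proof -
  have "dy_exponent alpha_data kappa_data \<psi>M a = dy_exponent alpha_data kappa_data data_psi a"
    "dy_exponent \<alpha>\<beta> \<kappa>\<beta> (\<lambda>l. \<psi>M (N + l)) b = dy_exponent \<alpha>\<beta> \<kappa>\<beta> \<psi>\<beta> b"
    "dy_exponent \<alpha>\<eta> \<kappa>\<eta> (\<lambda>l. \<psi>M (N + p + l)) d = dy_exponent \<alpha>\<eta> \<kappa>\<eta> \<psi>\<eta> d"
    "dy_exponent (0\<^sub>v N) half_vec (\<lambda>l. \<psi>M (N + p + r + l)) e = dy_exponent (0\<^sub>v N) half_vec (\<lambda>_. psi1) e"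
    using \<alpha>\<beta> \<alpha>\<eta> by (auto intro!: dy_exponent_cong simp: \<psi>M_def)
  then show ?thesis
    unfolding alpha_M_blocks kappa_M_blocks
    using assms[THEN carrier_vecD] \<alpha>\<beta>[THEN carrier_vecD] \<kappa>\<beta>[THEN carrier_vecD]
      \<alpha>\<eta>[THEN carrier_vecD] \<kappa>\<eta>[THEN carrier_vecD]
    by (simp add: dy_exponent_append)
qed

lemma prior_exponent_split:
  assumes "a \<in> carrier_vec N" "e \<in> carrier_vec N"
  shows "dy_exponent \<alpha>\<xi>v \<kappa>\<xi>v \<psi>\<xi> (a @\<^sub>v e)
    = dy_exponent alpha_prior kappa_prior data_psi a + dy_exponent (0\<^sub>v N) half_vec (\<lambda>_. psi1) e"
proof -
  have "dy_exponent alpha_prior kappa_prior \<psi>\<xi> a = dy_exponent alpha_prior kappa_prior data_psi a"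
    "dy_exponent (0\<^sub>v N) half_vec (\<lambda>l. \<psi>\<xi> (N + l)) e = dy_exponent (0\<^sub>v N) half_vec (\<lambda>_. psi1) e"
    by (auto intro!: dy_exponent_cong simp: \<psi>\<xi>_def)
  then show ?thesis
    unfolding alpha_xi_blocks kappa_xi_blocks using assms[THEN carrier_vecD]
    by (simp add: dy_exponent_append)
qed

lemma lik_eq_prod: "lik Y = (\<Prod>i<N. lik_coord i (Y $ i))"
  unfolding lik_def N_def prod_lessThan_add
  by (intro arg_cong2[where f = "(*)"] prod.cong refl) (simp_all add: lik_coord_def)

lemma lik_coord_dy_form:
  assumes i: "i < N"
  shows "lik_coord i y * exp (alpha_prior $ i * y - kappa_prior $ i * data_psi i y)
    = lik_coord_const i * exp (alpha_data $ i * (y - shift_data $ i)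
                               - kappa_data $ i * data_psi i (y - shift_data $ i))"
proof -
  consider "i < n1" | "n1 \<le> i" "i < n1 + n2" | "n1 + n2 \<le> i" "i < n1 + n2 + n3"
    | "n1 + n2 + n3 \<le> i" by linarith
  then show ?thesis
  proof cases
    case 1
    then show ?thesis using normal_density_dy_form[of "\<sigma>2 i" y "z $ i"] \<sigma>2_pos i
      by (simp add: lik_coord_def lik_coord_const_def alpha_prior_def kappa_prior_def
          alpha_data_def kappa_data_def shift_data_def blk_psi_def)
  next
    case 2
    have "z $ i \<in> \<nat>" using z_pois[rule_format, of "i - n1"] 2 by simp
    then obtain k where k: "z $ i = real k" by (metis Nats_cases)
    have "exp (real k * y - psi2 y) * exp (\<alpha>\<xi> * y) = exp ((real k + \<alpha>\<xi>) * y - psi2 y)"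
      by (simp add: exp_add[symmetric] algebra_simps)
    then show ?thesis using 2 i k
      by (simp add: lik_coord_def lik_coord_const_def alpha_prior_def kappa_prior_def alpha_data_def
          kappa_data_def shift_data_def blk_psi_def poisson_pmf_dy_form)
  next
    case 3
    have "z $ i \<in> \<nat>" and zm: "z $ i \<le> real (m (i - n1 - n2))"
      using z_binom[rule_format, of "i - n1 - n2"] 3 by simp_all
    then obtain k where k: "z $ i = real k" by (metis Nats_cases)
    with zm have km: "k \<le> m (i - n1 - n2)" by simp
    have "exp (real k * y - real (m (i - n1 - n2)) * psi3 y) * exp (\<alpha>\<xi> * y - 2 * \<alpha>\<xi> * psi3 y)
        = exp ((real k + \<alpha>\<xi>) * y - (real (m (i - n1 - n2)) + 2 * \<alpha>\<xi>) * psi3 y)"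
      by (simp add: exp_add[symmetric] algebra_simps)
    then show ?thesis using 3 i k binomial_pmf_dy_form[OF km, of y]
      by (simp add: lik_coord_def lik_coord_const_def alpha_prior_def kappa_prior_def alpha_data_def
          kappa_data_def shift_data_def blk_psi_def)
  next
    case 4
    then show ?thesis using student_kernel_dy_form[OF \<nu>_pos, of "z $ i" y] i
      by (simp add: lik_coord_def lik_coord_const_def alpha_prior_def kappa_prior_def alpha_data_def
          kappa_data_def shift_data_def blk_psi_def) (simp add: algebra_simps)
  qed
qed

lemma lik_const_pos: "lik_const > 0"
proof -
  have "lik_coord_const i > 0" if "i < N" for i
  proof -
    have "z $ i \<in> \<nat>" "z $ i \<le> real (m (i - n1 - n2))" if "n1 + n2 \<le> i" "i < n1 + n2 + n3"
      using z_binom[rule_format, of "i - n1 - n2"] that by auto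
    then show ?thesis unfolding lik_coord_const_def using \<sigma>2_pos by (auto elim!: Nats_cases)
  qed
  then show ?thesis unfolding lik_const_def by (intro prod_pos) auto
qed

lemma likelihood_conjugacy:
  assumes Y: "Y \<in> carrier_vec N"
  shows "lik Y * exp (dy_exponent alpha_prior kappa_prior data_psi Y)
    = lik_const * exp (dy_exponent alpha_data kappa_data data_psi (Y - shift_data))"
proof -
  have "lik Y * exp (dy_exponent alpha_prior kappa_prior data_psi Y)
      = (\<Prod>i<N. lik_coord i (Y $ i) * exp (alpha_prior $ i * Y $ i - kappa_prior $ i * data_psi i (Y $ i)))"
    using Y[THEN carrier_vecD] by (simp add: lik_eq_prod dy_exponent_eq_sum exp_sum prod.distrib)
  also have "\<dots> = (\<Prod>i<N. lik_coord_const i * exp (alpha_data $ i * (Y - shift_data) $ i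
                             - kappa_data $ i * data_psi i ((Y - shift_data) $ i)))"
    using Y by (intro prod.cong) (simp_all add: lik_coord_dy_form)
  also have "\<dots> = lik_const * exp (dy_exponent alpha_data kappa_data data_psi (Y - shift_data))"
    using Y[THEN carrier_vecD] by (simp add: lik_const_def dy_exponent_eq_sum exp_sum prod.distrib)
  finally show ?thesis .
qed

lemma Dinv_blocks:
  assumes \<theta>: "\<theta> \<in> space \<Theta>"
  shows "Dinv \<theta> = blkdiag (blkdiag (blkdiag (1\<^sub>m N) (minv (D\<beta> \<theta>))) (minv (D\<eta> \<theta>))) ((1 / \<sigma>\<xi>2) \<cdot>\<^sub>m 1\<^sub>m N)"
    and "minv (D\<beta> \<theta>) \<in> carrier_mat p p" and "minv (D\<eta> \<theta>) \<in> carrier_mat r r"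
  using Dinv_def invertible_mat_minv(1) D\<beta> D\<eta> \<theta> by auto

lemma Dinv_mult_blocks:
  assumes \<theta>: "\<theta> \<in> space \<Theta>"
    and "a \<in> carrier_vec N" "b \<in> carrier_vec p" "d \<in> carrier_vec r" "e \<in> carrier_vec N"
  shows "Dinv \<theta> *\<^sub>v (((a @\<^sub>v b) @\<^sub>v d) @\<^sub>v e)
    = ((a @\<^sub>v (minv (D\<beta> \<theta>) *\<^sub>v b)) @\<^sub>v (minv (D\<eta> \<theta>) *\<^sub>v d)) @\<^sub>v ((1 / \<sigma>\<xi>2) \<cdot>\<^sub>v e)"
proof -
  note D = Dinv_blocks[OF \<theta>]
  have "blkdiag (1\<^sub>m N) (minv (D\<beta> \<theta>)) \<in> carrier_mat (N + p) (N + p)" using D by simp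
  moreover then have "blkdiag (blkdiag (1\<^sub>m N) (minv (D\<beta> \<theta>))) (minv (D\<eta> \<theta>))
      \<in> carrier_mat (N + p + r) (N + p + r)" using D by simp
  ultimately show ?thesis unfolding D(1) using D assms
    by (simp add: blkdiag_mult_vec[of _ "N + p + r" _ N] blkdiag_mult_vec[of _ "N + p" _ r]
        blkdiag_mult_vec[of _ N _ p])
qed

lemma Dm_inverse:
  assumes \<theta>: "\<theta> \<in> space \<Theta>"
  shows "minv (Dm \<theta>) = Dinv \<theta>"
    and "\<bar>det (Dm \<theta>)\<bar> = \<bar>det (D\<beta> \<theta>)\<bar> * \<bar>det (D\<eta> \<theta>)\<bar> * \<sigma>\<xi>2 ^ N"
proof -
  have Db: "D\<beta> \<theta> \<in> carrier_mat p p" "D\<beta> \<theta> * minv (D\<beta> \<theta>) = 1\<^sub>m p"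
    and De: "D\<eta> \<theta> \<in> carrier_mat r r" "D\<eta> \<theta> * minv (D\<eta> \<theta>) = 1\<^sub>m r"
    using invertible_mat_minv D\<beta> D\<eta> \<theta> by auto
  note D = Dinv_blocks[OF \<theta>]
  define B where "B = blkdiag (blkdiag (blkdiag (1\<^sub>m N) (D\<beta> \<theta>)) (D\<eta> \<theta>)) (\<sigma>\<xi>2 \<cdot>\<^sub>m 1\<^sub>m N)"
  have Dc: "Dinv \<theta> \<in> carrier_mat (N + p + r + N) (N + p + r + N)" unfolding D(1) using D by simp
  have Bc: "B \<in> carrier_mat (N + p + r + N) (N + p + r + N)" unfolding B_def using Db De by simp
  have "(\<sigma>\<xi>2 \<cdot>\<^sub>m 1\<^sub>m N) * ((1 / \<sigma>\<xi>2) \<cdot>\<^sub>m 1\<^sub>m N) = (1\<^sub>m N :: real mat)"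
    using \<sigma>\<xi>2_pos by (intro eq_matI) auto
  then have BD: "B * Dinv \<theta> = 1\<^sub>m (N + p + r + N)"
    unfolding B_def D(1) using Db De D
    by (simp add: blkdiag_mult[of _ "N + p + r" _ N] blkdiag_mult[of _ "N + p" _ r]
        blkdiag_mult[of _ N _ p] blkdiag_one)
  have DB: "Dinv \<theta> * B = 1\<^sub>m (N + p + r + N)" by (rule mat_mult_left_right_inverse[OF Bc Dc BD])
  have Dm: "Dm \<theta> = B" unfolding Dm_def by (rule minv_eqI[OF Dc Bc DB])
  show "minv (Dm \<theta>) = Dinv \<theta>" unfolding Dm by (rule minv_eqI[OF Bc Dc BD])
  show "\<bar>det (Dm \<theta>)\<bar> = \<bar>det (D\<beta> \<theta>)\<bar> * \<bar>det (D\<eta> \<theta>)\<bar> * \<sigma>\<xi>2 ^ N"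
    unfolding Dm B_def using Db De \<sigma>\<xi>2_pos
    by (simp add: det_blkdiag[of _ "N + p + r" _ N] det_blkdiag[of _ "N + p" _ r]
        det_blkdiag[of _ N _ p] abs_mult)
qed

lemma A_mult_vec:
  assumes "\<xi> \<in> carrier_vec N" "\<beta> \<in> carrier_vec p" "\<eta> \<in> carrier_vec r"
  shows "A *\<^sub>v ((\<xi> @\<^sub>v \<beta>) @\<^sub>v \<eta>) = (\<xi> + X *\<^sub>v \<beta> + G *\<^sub>v \<eta>) @\<^sub>v ((1 / \<sigma>\<xi>2) \<cdot>\<^sub>v \<xi>)"
  unfolding A_def using assms carrier_matD[OF X] carrier_matD[OF G]
  by (simp add: vcat_mult_vec hcat_mult_vec)

lemma gcm_arg_blocks:
  assumes \<theta>: "\<theta> \<in> space \<Theta>"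
    and \<xi>: "\<xi> \<in> carrier_vec N" and \<beta>: "\<beta> \<in> carrier_vec p" and \<eta>: "\<eta> \<in> carrier_vec r"
    and q: "q \<in> carrier_vec N"
  defines "w \<equiv> Q *\<^sub>v q"
  shows "gcm_arg (((\<xi> @\<^sub>v \<beta>) @\<^sub>v \<eta>) @\<^sub>v q) \<theta>
    = ((((\<xi> + X *\<^sub>v \<beta> + G *\<^sub>v \<eta> + vblock w 0 N) - shift_data)
          @\<^sub>v (minv (D\<beta> \<theta>) *\<^sub>v (\<beta> + vblock w N p)))
          @\<^sub>v (minv (D\<eta> \<theta>) *\<^sub>v (\<eta> + vblock w (N + p) r)))
          @\<^sub>v ((1 / \<sigma>\<xi>2) \<cdot>\<^sub>v (\<xi> + vblock w (N + p + r) N))"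
proof -
  have w: "w \<in> carrier_vec (N + p + r + N)" unfolding w_def using Q q M_eq by simp
  have "hcat H Q *\<^sub>v (((\<xi> @\<^sub>v \<beta>) @\<^sub>v \<eta>) @\<^sub>v q) = H *\<^sub>v ((\<xi> @\<^sub>v \<beta>) @\<^sub>v \<eta>) + w"
    unfolding w_def using H_carrier Q \<xi> \<beta> \<eta> q by (simp add: hcat_mult_vec)
  also have "\<dots> = ((((\<xi> + X *\<^sub>v \<beta> + G *\<^sub>v \<eta>) @\<^sub>v \<beta>) @\<^sub>v \<eta>) @\<^sub>v \<xi>)
      + (((vblock w 0 N @\<^sub>v vblock w N p) @\<^sub>v vblock w (N + p) r) @\<^sub>v vblock w (N + p + r) N)"
    unfolding H_mult_vec[OF \<xi> \<beta> \<eta>] append_vblocks4[OF w] ..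
  finally have HQx: "hcat H Q *\<^sub>v (((\<xi> @\<^sub>v \<beta>) @\<^sub>v \<eta>) @\<^sub>v q)
      = ((((\<xi> + X *\<^sub>v \<beta> + G *\<^sub>v \<eta>) @\<^sub>v \<beta>) @\<^sub>v \<eta>) @\<^sub>v \<xi>)
        + (((vblock w 0 N @\<^sub>v vblock w N p) @\<^sub>v vblock w (N + p) r) @\<^sub>v vblock w (N + p + r) N)" .
  have "hcat H Q *\<^sub>v (((\<xi> @\<^sub>v \<beta>) @\<^sub>v \<eta>) @\<^sub>v q) - c
      = ((((\<xi> + X *\<^sub>v \<beta> + G *\<^sub>v \<eta> + vblock w 0 N) - shift_data) @\<^sub>v (\<beta> + vblock w N p))
          @\<^sub>v (\<eta> + vblock w (N + p) r)) @\<^sub>v (\<xi> + vblock w (N + p + r) N)"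
    unfolding HQx c_blocks using \<xi> \<beta> \<eta> X G by (intro eq_vecI) auto
  then show ?thesis
    unfolding gcm_arg_def using Dinv_mult_blocks[OF \<theta>] \<xi> \<beta> \<eta> X G by simp
qed

lemma prior_arguments:
  assumes \<theta>: "\<theta> \<in> space \<Theta>"
    and \<xi>: "\<xi> \<in> carrier_vec N" and \<beta>: "\<beta> \<in> carrier_vec p" and \<eta>: "\<eta> \<in> carrier_vec r"
    and q: "q \<in> carrier_vec N"
  defines "w \<equiv> Q *\<^sub>v q" and "loc \<equiv> - (Dinv \<theta> *\<^sub>v (Q *\<^sub>v q))"
  shows "X *\<^sub>v \<beta> + G *\<^sub>v \<eta> + \<xi> - vblock loc 0 N = \<xi> + X *\<^sub>v \<beta> + G *\<^sub>v \<eta> + vblock w 0 N"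
    and "A *\<^sub>v ((\<xi> @\<^sub>v \<beta>) @\<^sub>v \<eta>) - (vblock loc 0 N @\<^sub>v vblock loc (N + p + r) N)
      = (\<xi> + X *\<^sub>v \<beta> + G *\<^sub>v \<eta> + vblock w 0 N) @\<^sub>v ((1 / \<sigma>\<xi>2) \<cdot>\<^sub>v (\<xi> + vblock w (N + p + r) N))"
    and "minv (D\<beta> \<theta>) *\<^sub>v \<beta> - vblock loc N p = minv (D\<beta> \<theta>) *\<^sub>v (\<beta> + vblock w N p)"
    and "minv (D\<eta> \<theta>) *\<^sub>v \<eta> - vblock loc (N + p) r = minv (D\<eta> \<theta>) *\<^sub>v (\<eta> + vblock w (N + p) r)"
proof -
  note D = Dinv_blocks(2,3)[OF \<theta>]
  have w: "w \<in> carrier_vec (N + p + r + N)" unfolding w_def using Q q M_eq by simp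
  have "loc = ((- vblock w 0 N @\<^sub>v - (minv (D\<beta> \<theta>) *\<^sub>v vblock w N p))
      @\<^sub>v - (minv (D\<eta> \<theta>) *\<^sub>v vblock w (N + p) r)) @\<^sub>v - ((1 / \<sigma>\<xi>2) \<cdot>\<^sub>v vblock w (N + p + r) N)"
    using Dinv_mult_blocks[OF \<theta>, of "vblock w 0 N" "vblock w N p" "vblock w (N + p) r" "vblock w (N + p + r) N"]
    unfolding loc_def append_vblocks4[OF w] w_def[symmetric] by (simp add: uminus_append_vec)
  then have "vblock loc 0 N = - vblock w 0 N"
    "vblock loc N p = - (minv (D\<beta> \<theta>) *\<^sub>v vblock w N p)"
    "vblock loc (N + p) r = - (minv (D\<eta> \<theta>) *\<^sub>v vblock w (N + p) r)"
    "vblock loc (N + p + r) N = - ((1 / \<sigma>\<xi>2) \<cdot>\<^sub>v vblock w (N + p + r) N)"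
    using D by simp_all
  moreover have "minv (D\<beta> \<theta>) *\<^sub>v (\<beta> + vblock w N p) = minv (D\<beta> \<theta>) *\<^sub>v \<beta> + minv (D\<beta> \<theta>) *\<^sub>v vblock w N p"
    "minv (D\<eta> \<theta>) *\<^sub>v (\<eta> + vblock w (N + p) r) = minv (D\<eta> \<theta>) *\<^sub>v \<eta> + minv (D\<eta> \<theta>) *\<^sub>v vblock w (N + p) r"
    using D \<beta> \<eta> by (simp_all add: mult_add_distrib_mat_vec)
  ultimately show "X *\<^sub>v \<beta> + G *\<^sub>v \<eta> + \<xi> - vblock loc 0 N = \<xi> + X *\<^sub>v \<beta> + G *\<^sub>v \<eta> + vblock w 0 N"
    and "A *\<^sub>v ((\<xi> @\<^sub>v \<beta>) @\<^sub>v \<eta>) - (vblock loc 0 N @\<^sub>v vblock loc (N + p + r) N)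
      = (\<xi> + X *\<^sub>v \<beta> + G *\<^sub>v \<eta> + vblock w 0 N) @\<^sub>v ((1 / \<sigma>\<xi>2) \<cdot>\<^sub>v (\<xi> + vblock w (N + p + r) N))"
    and "minv (D\<beta> \<theta>) *\<^sub>v \<beta> - vblock loc N p = minv (D\<beta> \<theta>) *\<^sub>v (\<beta> + vblock w N p)"
    and "minv (D\<eta> \<theta>) *\<^sub>v \<eta> - vblock loc (N + p) r = minv (D\<eta> \<theta>) *\<^sub>v (\<eta> + vblock w (N + p) r)"
    using A_mult_vec[OF \<xi> \<beta> \<eta>] \<xi> \<beta> \<eta> X G D
    by (auto intro!: eq_vecI simp: algebra_simps)
qed

lemma unnorm_factorisation:
  assumes x: "x \<in> carrier_vec M"
  shows "unnorm x = lik_const * indicator R x * gcm_kernel x"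
proof -
  define \<zeta> q where "\<zeta> = vec_first x (N + p + r)" and "q = vec_last x N"
  define \<xi> \<beta> \<eta> where "\<xi> = vblock \<zeta> 0 N" and "\<beta> = vblock \<zeta> N p" and "\<eta> = vblock \<zeta> (N + p) r"
  have \<xi>: "\<xi> \<in> carrier_vec N" and \<beta>: "\<beta> \<in> carrier_vec p" and \<eta>: "\<eta> \<in> carrier_vec r"
    and q: "q \<in> carrier_vec N" unfolding \<xi>_def \<beta>_def \<eta>_def q_def by auto
  have \<zeta>_eq: "\<zeta> = (\<xi> @\<^sub>v \<beta>) @\<^sub>v \<eta>"
    unfolding \<xi>_def \<beta>_def \<eta>_def \<zeta>_def by (simp add: append_vblocks3)
  have x_eq: "x = ((\<xi> @\<^sub>v \<beta>) @\<^sub>v \<eta>) @\<^sub>v q"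
    using x M_eq unfolding \<zeta>_eq[symmetric] \<zeta>_def q_def by simp
  have fold_exponents: "\<And>u. scalar_prod \<alpha>\<xi>v u - (\<Sum>l<2 * N. \<kappa>\<xi>v $ l * \<psi>\<xi> l (u $ l)) = dy_exponent \<alpha>\<xi>v \<kappa>\<xi>v \<psi>\<xi> u"
    "\<And>u. scalar_prod \<alpha>\<beta> u - (\<Sum>j<p. \<kappa>\<beta> $ j * \<psi>\<beta> j (u $ j)) = dy_exponent \<alpha>\<beta> \<kappa>\<beta> \<psi>\<beta> u"
    "\<And>u. scalar_prod \<alpha>\<eta> u - (\<Sum>j<r. \<kappa>\<eta> $ j * \<psi>\<eta> j (u $ j)) = dy_exponent \<alpha>\<eta> \<kappa>\<eta> \<psi>\<eta> u"
    using \<alpha>\<beta> \<alpha>\<eta> unfolding dy_exponent_def \<alpha>\<xi>v_def by auto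
  have "unnorm x = (\<integral>\<theta>. lik_const * indicator R x * (\<pi> \<theta> * exp (dy_exponent \<alpha>M \<kappa>M \<psi>M (gcm_arg x \<theta>))
                          / (\<bar>det (D\<beta> \<theta>)\<bar> * \<bar>det (D\<eta> \<theta>)\<bar>)) \<partial>\<Theta>)"
    unfolding unnorm_def Let_def fold_exponents
    unfolding \<zeta>_def[symmetric] q_def[symmetric] \<xi>_def[symmetric] \<beta>_def[symmetric] \<eta>_def[symmetric]
  proof (rule Bochner_Integration.integral_cong[OF refl], goal_cases)
    case (1 \<theta>)
    note \<theta> = 1
    define Y where "Y = \<xi> + X *\<^sub>v \<beta> + G *\<^sub>v \<eta> + vblock (Q *\<^sub>v q) 0 N"
    define T4 where "T4 = (1 / \<sigma>\<xi>2) \<cdot>\<^sub>v (\<xi> + vblock (Q *\<^sub>v q) (N + p + r) N)"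
    note args = prior_arguments[OF \<theta> \<xi> \<beta> \<eta> q, folded Y_def T4_def \<zeta>_eq]
    have Y: "Y \<in> carrier_vec N" and T4: "T4 \<in> carrier_vec N"
      unfolding Y_def T4_def using \<xi> \<beta> \<eta> X G by auto
    have ind: "indicator R x = (if g q \<le> \<omega> then 1 else 0)"
      unfolding R_def q_def indicator_def by simp
    have arg: "gcm_arg x \<theta> = (((Y - shift_data) @\<^sub>v (minv (D\<beta> \<theta>) *\<^sub>v (\<beta> + vblock (Q *\<^sub>v q) N p)))
        @\<^sub>v (minv (D\<eta> \<theta>) *\<^sub>v (\<eta> + vblock (Q *\<^sub>v q) (N + p) r))) @\<^sub>v T4"
      unfolding x_eq Y_def T4_def by (rule gcm_arg_blocks[OF \<theta> \<xi> \<beta> \<eta> q])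
    have "lik Y = lik_const * exp (dy_exponent alpha_data kappa_data data_psi (Y - shift_data)
        + dy_exponent (0\<^sub>v N) half_vec (\<lambda>_. psi1) T4 - dy_exponent \<alpha>\<xi>v \<kappa>\<xi>v \<psi>\<xi> (Y @\<^sub>v T4))"
      using likelihood_conjugacy[OF Y] prior_exponent_split[OF Y T4]
      by (simp add: exp_add exp_diff field_simps)
    then show ?case
      unfolding args arg ind
      using gcm_exponent_split[OF _ _ _ T4, of "Y - shift_data"] Y Dinv_blocks(2,3)[OF \<theta>] \<beta> \<eta>
      by (simp add: exp_add exp_diff field_simps)
  qed
  then show ?thesis unfolding gcm_kernel_def integral_mult_right_zero[symmetric] by simp
qed

lemma gcm_factorisation:
  assumes x: "x \<in> carrier_vec M"
  shows "gcm x = (\<Prod>l<M. DY_const (\<alpha>M $ l) (\<kappa>M $ l) (\<psi>M l)) / (\<bar>det VM\<bar> * \<sigma>\<xi>2 ^ N) * gcm_kernel x"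
proof -
  have "gcm x = (\<Prod>l<dim_vec \<alpha>M. DY_const (\<alpha>M $ l) (\<kappa>M $ l) (\<psi>M l)) / \<bar>det VM\<bar>
      * (\<integral>\<theta>. \<pi> \<theta> / \<bar>det (Dm \<theta>)\<bar> * exp (dy_exponent \<alpha>M \<kappa>M \<psi>M (gcm_arg x \<theta>)) \<partial>\<Theta>)"
    unfolding gcm_def \<mu>M_def gcm_arg_def
    by (rule gcm_density_inverse_param) (use hcat_H_Q_minv VM_def c_def x Dm_inverse(1) in auto)
  also have "(\<integral>\<theta>. \<pi> \<theta> / \<bar>det (Dm \<theta>)\<bar> * exp (dy_exponent \<alpha>M \<kappa>M \<psi>M (gcm_arg x \<theta>)) \<partial>\<Theta>)
      = gcm_kernel x / \<sigma>\<xi>2 ^ N"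
    unfolding gcm_kernel_def integral_divide_zero[symmetric]
    by (rule Bochner_Integration.integral_cong) (simp_all add: Dm_inverse(2) field_simps)
  finally show ?thesis using \<alpha>M_def by simp
qed

lemma posterior_eq_truncated_gcm: "\<forall>x\<in>carrier_vec M. post x = gcm x * indicator R x / PR"
  using vint_truncated_normalisation[OF unnorm_factorisation gcm_factorisation _ PR_pos[unfolded PR_def]]
    lik_const_pos unfolding post_def PR_def by simp

end


theorem theorem6:
  fixes n1 n2 n3 n4 p r :: nat
    and z :: "real vec" and \<sigma>2 :: "nat \<Rightarrow> real" and m :: "nat \<Rightarrow> nat" and \<nu> :: real
    and X G Q :: "real mat"
    and \<Theta> :: "'a measure" and \<pi> :: "'a \<Rightarrow> real"
    and D\<beta> D\<eta> :: "'a \<Rightarrow> real mat"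
    and \<alpha>\<beta> \<kappa>\<beta> \<alpha>\<eta> \<kappa>\<eta> :: "real vec" and \<psi>\<beta> \<psi>\<eta> :: "nat \<Rightarrow> real \<Rightarrow> real"
    and \<alpha>\<xi> \<sigma>\<xi>2 \<omega> :: real
    and N M H E g Dinv Dm A \<alpha>\<xi>v \<kappa>\<xi>v \<psi>\<xi> lik unnorm post c \<alpha>M \<kappa>M \<psi>M VM \<mu>M gcm R PR
  assumes "N = n1 + n2 + n3 + n4"
    and "M = 2 * N + p + r"
    and "H = vcat (vcat (vcat (hcat (hcat (1\<^sub>m N) X) G)
                             (hcat (hcat (0\<^sub>m p N) (1\<^sub>m p)) (0\<^sub>m p r)))
                       (hcat (hcat (0\<^sub>m r N) (0\<^sub>m r p)) (1\<^sub>m r)))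
                 (hcat (hcat (1\<^sub>m N) (0\<^sub>m N p)) (0\<^sub>m N r))"
    and "E = hcat (1\<^sub>m N) (0\<^sub>m N (N + p + r))"
    and "g = (\<lambda>q. mtrace (E * Q * outer q * Q\<^sup>T * E\<^sup>T))"
    and "Dinv = (\<lambda>\<theta>. blkdiag (blkdiag (blkdiag (1\<^sub>m N) (minv (D\<beta> \<theta>))) (minv (D\<eta> \<theta>)))
                              ((1 / \<sigma>\<xi>2) \<cdot>\<^sub>m 1\<^sub>m N))"
    and "Dm = (\<lambda>\<theta>. minv (Dinv \<theta>))"
    and "A = vcat (hcat (hcat (1\<^sub>m N) X) G)
                 (hcat (hcat ((1 / \<sigma>\<xi>2) \<cdot>\<^sub>m 1\<^sub>m N) (0\<^sub>m N p)) (0\<^sub>m N r))"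
    and "\<alpha>\<xi>v = Matrix.vec (2 * N) (\<lambda>l. if n1 \<le> l \<and> l < n1 + n2 + n3 then \<alpha>\<xi> else 0)"
    and "\<kappa>\<xi>v = Matrix.vec (2 * N) (\<lambda>l. if n1 + n2 \<le> l \<and> l < n1 + n2 + n3 then 2 * \<alpha>\<xi>
                                        else if N \<le> l then 1 / 2 else 0)"
    and "\<psi>\<xi> = (\<lambda>l. if l < N then blk_psi n1 n2 n3 \<nu> l else psi1)"
    and "lik = (\<lambda>y.
           (\<Prod>i<n1. normal_density (y $ i) (sqrt (\<sigma>2 i)) (z $ i))
         * (\<Prod>i<n2. pmf (poisson_pmf (exp (y $ (n1 + i)))) (nat \<lfloor>z $ (n1 + i)\<rfloor>))
         * (\<Prod>i<n3. pmf (binomial_pmf (m i) (exp (y $ (n1 + n2 + i)) / (1 + exp (y $ (n1 + n2 + i)))))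
                        (nat \<lfloor>z $ (n1 + n2 + i)\<rfloor>))
         * (\<Prod>i<n4. (1 + (z $ (n1 + n2 + n3 + i) - y $ (n1 + n2 + n3 + i))\<^sup>2 / \<nu>) powr (- (\<nu> + 1) / 2)))"
    and "unnorm = (\<lambda>x.
           (let \<zeta> = vec_first x (N + p + r); q = vec_last x N;
                \<xi> = vblock \<zeta> 0 N; \<beta> = vblock \<zeta> N p; \<eta> = vblock \<zeta> (N + p) r
            in \<integral>\<theta>. (let loc = - (Dinv \<theta> *\<^sub>v (Q *\<^sub>v q));
                         \<mu>D = vblock loc 0 N; \<mu>\<beta> = vblock loc N p;
                         \<mu>\<eta> = vblock loc (N + p) r; \<mu>\<xi> = vblock loc (N + p + r) N;
                         y = X *\<^sub>v \<beta> + G *\<^sub>v \<eta> + \<xi> - \<mu>D;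
                         u\<xi> = A *\<^sub>v \<zeta> - (\<mu>D @\<^sub>v \<mu>\<xi>);
                         u\<beta> = minv (D\<beta> \<theta>) *\<^sub>v \<beta> - \<mu>\<beta>;
                         u\<eta> = minv (D\<eta> \<theta>) *\<^sub>v \<eta> - \<mu>\<eta>
                     in \<pi> \<theta> * lik y
                        * exp (scalar_prod \<alpha>\<xi>v u\<xi> - (\<Sum>l<2 * N. \<kappa>\<xi>v $ l * \<psi>\<xi> l (u\<xi> $ l)))
                        * (1 / \<bar>det (D\<beta> \<theta>)\<bar>)
                        * exp (scalar_prod \<alpha>\<beta> u\<beta> - (\<Sum>j<p. \<kappa>\<beta> $ j * \<psi>\<beta> j (u\<beta> $ j)))
                        * (1 / \<bar>det (D\<eta> \<theta>)\<bar>)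
                        * exp (scalar_prod \<alpha>\<eta> u\<eta> - (\<Sum>j<r. \<kappa>\<eta> $ j * \<psi>\<eta> j (u\<eta> $ j)))
                        * (if g q \<le> \<omega> then 1 else 0)) \<partial>\<Theta>))"
    and "post = (\<lambda>x. unnorm x / vint M unnorm)"
    and "c = Matrix.vec M (\<lambda>i. if n1 + n2 + n3 \<le> i \<and> i < N then z $ i else 0)"
    and "\<alpha>M = Matrix.vec M (\<lambda>i. if i < n1 then z $ i / \<sigma>2 i
                              else if i < n1 + n2 + n3 then z $ i + \<alpha>\<xi>
                              else if i < N then 0
                              else if i < N + p then \<alpha>\<beta> $ (i - N)
                              else if i < N + p + r then \<alpha>\<eta> $ (i - N - p)
                              else 0)"
    and "\<kappa>M = Matrix.vec M (\<lambda>i. if i < n1 then 1 / (2 * \<sigma>2 i)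
                              else if i < n1 + n2 then 1
                              else if i < n1 + n2 + n3 then real (m (i - n1 - n2)) + 2 * \<alpha>\<xi>
                              else if i < N then (\<nu> + 1) / 2
                              else if i < N + p then \<kappa>\<beta> $ (i - N)
                              else if i < N + p + r then \<kappa>\<eta> $ (i - N - p)
                              else 1 / 2)"
    and "\<psi>M = (\<lambda>i. if i < N then blk_psi n1 n2 n3 \<nu> i
                 else if i < N + p then \<psi>\<beta> (i - N)
                 else if i < N + p + r then \<psi>\<eta> (i - N - p)
                 else psi1)"
    and "VM = minv (hcat H Q)"
    and "\<mu>M = VM *\<^sub>v c"
    and "gcm = gcm_density \<Theta> \<pi> \<alpha>M \<kappa>M \<mu>M VM Dm \<psi>M"
    and "R = {x. g (vec_last x N) \<le> \<omega>}"
    and "PR = vint M (\<lambda>x. indicator R x * gcm x)"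
    and z: "z \<in> carrier_vec N"
    and \<sigma>2_pos: "\<forall>i<n1. \<sigma>2 i > 0"
    and z_pois: "\<forall>i<n2. z $ (n1 + i) \<in> \<nat>"
    and z_binom: "\<forall>i<n3. z $ (n1 + n2 + i) \<in> \<nat> \<and> z $ (n1 + n2 + i) \<le> real (m i)"
    and \<nu>_pos: "\<nu> > 0"
    and X: "X \<in> carrier_mat N p" and G: "G \<in> carrier_mat N r"
    and \<pi>_meas: "\<pi> \<in> borel_measurable \<Theta>"
    and \<pi>_nonneg: "\<forall>\<theta>\<in>space \<Theta>. \<pi> \<theta> \<ge> 0"
    and \<pi>_proper: "integral\<^sup>L \<Theta> \<pi> = 1"
    and D\<beta>: "\<forall>\<theta>\<in>space \<Theta>. D\<beta> \<theta> \<in> carrier_mat p p \<and> invertible_mat (D\<beta> \<theta>)"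
    and D\<eta>: "\<forall>\<theta>\<in>space \<Theta>. D\<eta> \<theta> \<in> carrier_mat r r \<and> invertible_mat (D\<eta> \<theta>)"
    and \<alpha>\<beta>: "\<alpha>\<beta> \<in> carrier_vec p" and \<kappa>\<beta>: "\<kappa>\<beta> \<in> carrier_vec p"
    and \<alpha>\<eta>: "\<alpha>\<eta> \<in> carrier_vec r" and \<kappa>\<eta>: "\<kappa>\<eta> \<in> carrier_vec r"
    and DY\<beta>: "\<forall>j<p. integrable lborel (\<lambda>w. exp (\<alpha>\<beta> $ j * w - \<kappa>\<beta> $ j * \<psi>\<beta> j w))"
    and DY\<eta>: "\<forall>j<r. integrable lborel (\<lambda>w. exp (\<alpha>\<eta> $ j * w - \<kappa>\<eta> $ j * \<psi>\<eta> j w))"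
    and \<alpha>\<xi>_pos: "\<alpha>\<xi> > 0" and \<sigma>\<xi>2_pos: "\<sigma>\<xi>2 > 0" and \<omega>_pos: "\<omega> > 0"
    and Q: "Q \<in> carrier_mat M N"
    and Q_orth: "Q\<^sup>T * Q = 1\<^sub>m N"
    and HQ: "H\<^sup>T * Q = 0\<^sub>m (N + p + r) N"
    and QQ: "Q * Q\<^sup>T = 1\<^sub>m M - H * minv (H\<^sup>T * H) * H\<^sup>T"
    and PR_pos: "PR > 0"
  shows "(\<forall>x\<in>carrier_vec M. post x = gcm x * indicator R x / PR)
       \<and> (\<forall>w\<in>carrier_vec M.
            let \<zeta>rep = minv (H\<^sup>T * H) *\<^sub>v (H\<^sup>T *\<^sub>v w);
                qrep = Q\<^sup>T *\<^sub>v w;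
                yrep = E *\<^sub>v w;
                yhat = E *\<^sub>v (H *\<^sub>v \<zeta>rep)
            in g qrep = scalar_prod (yrep - yhat) (yrep - yhat))"
proof -
  interpret truncated_gcm_model N p r M X G H Q E g n1 n2 n3 n4 z \<sigma>2 m \<nu> \<Theta> \<pi> D\<beta> D\<eta>
      \<alpha>\<beta> \<kappa>\<beta> \<alpha>\<eta> \<kappa>\<eta> \<psi>\<beta> \<psi>\<eta> \<alpha>\<xi> \<sigma>\<xi>2 \<omega> Dinv Dm A VM \<alpha>\<xi>v \<kappa>\<xi>v c \<alpha>M \<kappa>M \<mu>M
      \<psi>\<xi> \<psi>M lik unnorm post gcm R PR
    by unfold_locales (fact assms)+
  show ?thesis using posterior_eq_truncated_gcm g_eq_residual_sum_of_squares by blast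
qed

end
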